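(* Consider the Sinus flow $U(y)=(1+\cos(\pi y))/2$ on $[-1,1]$ and fix $\beta\in[-\frac{\pi^2}{2},\frac{\pi^2}{2}]$. (i) When $\alpha^2>\frac{3\pi^2}{4}$, there exist no neutral modes in $H^2$ with wave number $\alpha$. (ii) When $\alpha^2=\frac{3\pi^2}{4}$, $(c=U_\beta,\alpha,\beta,\phi_0)$ with $\phi_0(y)=\cos(\pi y/2)$ and $U_\beta=\frac12-\frac\beta{\pi^2}$ is the only neutral mode in $H^2$ (up to scalar multiples of $\phi_0$).
   Context: A neutral mode in $H^2$ with wave number $\alpha>0$ is $(c,\alpha,\beta,\phi)$ with $c\in\mathbb{R}$ and $\phi\in H^2(-1,1)$ nontrivial solving $-\phi''+\alpha^2\phi-\frac{\beta-U''}{U-c}\phi=0$ on $(-1,1)\setminus\{U=c\}$, $\phi(\pm1)=0$. *)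

theory Defs
  imports "HOL-Analysis.Analysis"
begin

text \<open>Sobolev space H^2(-1,1) in one dimension (complex-valued functions):
  phi has a derivative phi' and a second (weak) derivative phi'' in L^2(-1,1),
  with phi and phi' absolutely continuous, i.e. they are indefinite integrals
  of phi' and phi'' respectively on [-1,1]. phi'' is a witness for the weak
  second derivative.\<close>
definition H2_with :: "(real \<Rightarrow> complex) \<Rightarrow> (real \<Rightarrow> complex) \<Rightarrow> (real \<Rightarrow> complex) \<Rightarrow> bool" where
  "H2_with \<phi> \<phi>' \<phi>'' \<longleftrightarrow>
     \<phi>'' absolutely_integrable_on {-1..1} \<and>
     (\<lambda>x. (norm (\<phi>'' x))\<^sup>2) integrable_on {-1..1} \<and>
     (\<forall>a b. -1 \<le> a \<longrightarrow> a \<le> b \<longrightarrow> b \<le> 1 \<longrightarrow>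
        (\<phi>'' has_integral (\<phi>' b - \<phi>' a)) {a..b} \<and>
        (\<phi>' has_integral (\<phi> b - \<phi> a)) {a..b})"

definition neutral_mode :: "(real \<Rightarrow> real) \<Rightarrow> real \<Rightarrow> real \<Rightarrow> real \<Rightarrow> (real \<Rightarrow> complex) \<Rightarrow> bool" where
  "neutral_mode U c \<alpha> \<beta> \<phi> \<longleftrightarrow>
     \<alpha> > 0 \<and>
     (\<exists>y\<in>{-1..1}. \<phi> y \<noteq> 0) \<and>
     \<phi> (-1) = 0 \<and> \<phi> 1 = 0 \<and>
     (\<exists>\<phi>' \<phi>''. H2_with \<phi> \<phi>' \<phi>'' \<and>
        (AE y in lebesgue. y \<in> {-1<..<1} \<longrightarrow> U y \<noteq> c \<longrightarrow>
           - \<phi>'' y + complex_of_real (\<alpha>\<^sup>2) * \<phi> y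
             - complex_of_real ((\<beta> - deriv (deriv U) y) / (U y - c)) * \<phi> y = 0))"

definition sinus_flow :: "real \<Rightarrow> real" where
  "sinus_flow y = (1 + cos (pi * y)) / 2"

end

(* For the sinus flow beta - U'' = pi^2 (U - U_beta), so a neutral mode solves phi'' = q phi with
   q = alpha^2 - pi^2 - pi^2 (c - U_beta) / (U - c), and so do its real and imaginary parts.
   The function cos (pi y / 2) is positive on (-1, 1), vanishes at +-1 and solves
   h'' = - (pi^2 / 4) h. Picone's identity for the pair (u, cos (pi y / 2)) shows that a solution
   vanishing at both ends of an interval on which q >= - pi^2 / 4 is a multiple of cos (pi y / 2),
   and that (q + pi^2 / 4) u^2 = 0 there. As alpha^2 >= 3 pi^2 / 4, this applies on all of (-1, 1)
   when c = U_beta, where q = alpha^2 - pi^2, and otherwise wherever U - c and c - U_beta have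
   opposite signs. The remaining intervals end at a critical point z with U z = c: the simple pole
   of q at z forces u z = 0, and the bound |q| <= M / |y - z| lets a Gronwall argument propagate the
   vanishing Cauchy data from z. So the mode vanishes unless c = U_beta and alpha^2 = 3 pi^2 / 4. *)

theory Submission
  imports Defs
begin

section \<open>Elementary trigonometric bounds\<close>

lemma x_cos_le_sin:
  assumes "0 \<le> x" "x \<le> pi"
  shows "x * cos x \<le> sin x"
proof -
  have "(\<lambda>t. sin t - t * cos t) 0 \<le> (\<lambda>t. sin t - t * cos t) x"
  proof (rule DERIV_nonneg_imp_increasing_open[OF assms(1)])
    fix t assume t: "0 < t" "t < x"
    have "DERIV (\<lambda>t. sin t - t * cos t) t :> t * sin t"
      by (auto intro!: derivative_eq_intros)
    moreover have "0 \<le> t * sin t"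
      using t assms by (intro mult_nonneg_nonneg sin_ge_zero) auto
    ultimately show "\<exists>y. DERIV (\<lambda>t. sin t - t * cos t) t :> y \<and> 0 \<le> y" by blast
  qed (auto intro!: continuous_intros)
  then show ?thesis by simp
qed

lemma half_le_sin:
  assumes "0 \<le> x" "x \<le> pi / 2"
  shows "x / 2 \<le> sin x"
proof -
  have cos_half: "0 \<le> cos (x / 2)"
    using assms by (intro cos_ge_zero) auto
  have "x / 2 * cos (x / 2) * cos (x / 2) \<le> sin (x / 2) * cos (x / 2)"
    using x_cos_le_sin[of "x / 2"] assms cos_half by (intro mult_right_mono) auto
  then have "x * (1 + cos x) / 4 \<le> sin x / 2"
    using sin_double[of "x / 2"] cos_double_cos[of "x / 2"]
    by (simp add: power2_eq_square algebra_simps)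
  moreover have "x * 1 \<le> x * (1 + cos x)"
    using assms cos_ge_zero[of x] by (intro mult_left_mono) auto
  ultimately show ?thesis by linarith
qed

lemma min_le_sin:
  assumes "0 \<le> x" "x \<le> pi"
  shows "min x (pi - x) / 2 \<le> sin x"
proof (cases "x \<le> pi / 2")
  case True
  then show ?thesis using half_le_sin[of x] assms by (simp add: min_def)
next
  case False
  then show ?thesis using half_le_sin[of "pi - x"] assms by (simp add: min_def)
qed

lemma cos_diff_lower_bound:
  assumes "0 \<le> s" "s \<le> pi" "0 \<le> t" "t \<le> pi"
  shows "min t (pi - t) * \<bar>s - t\<bar> / 8 \<le> \<bar>cos s - cos t\<bar>"
proof -
  have "min t (pi - t) / 4 \<le> min ((s + t) / 2) (pi - (s + t) / 2) / 2"
    using assms by (auto simp: min_def field_simps)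
  also have "\<dots> \<le> sin ((s + t) / 2)"
    using assms by (intro min_le_sin) auto
  finally have mid: "min t (pi - t) / 4 \<le> sin ((s + t) / 2)" .
  have sin_nonneg: "0 \<le> sin (\<bar>t - s\<bar> / 2)"
    using assms by (intro sin_ge_zero) auto
  have "(t - s) / 2 = \<bar>t - s\<bar> / 2 \<or> (t - s) / 2 = - (\<bar>t - s\<bar> / 2)"
    by linarith
  then have "\<bar>sin ((t - s) / 2)\<bar> = sin (\<bar>t - s\<bar> / 2)"
    using sin_nonneg by (metis abs_minus_cancel abs_of_nonneg sin_minus)
  moreover have "\<bar>t - s\<bar> / 2 / 2 \<le> sin (\<bar>t - s\<bar> / 2)"
    using assms by (intro half_le_sin) auto
  ultimately have gap: "\<bar>s - t\<bar> / 4 \<le> \<bar>sin ((t - s) / 2)\<bar>"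
    by (simp add: abs_minus_commute)
  have "min t (pi - t) / 4 * (\<bar>s - t\<bar> / 4) \<le> sin ((s + t) / 2) * \<bar>sin ((t - s) / 2)\<bar>"
    using mid gap assms by (intro mult_mono) auto
  also have "\<dots> = \<bar>cos s - cos t\<bar> / 2"
    using mid assms by (simp add: cos_diff_cos abs_mult)
  finally show ?thesis by (simp add: mult.commute)
qed

lemma half_distance_to_boundary_le_cos:
  assumes "\<bar>y\<bar> \<le> 1"
  shows "(1 - \<bar>y\<bar>) / 2 \<le> cos (pi * y / 2)"
proof -
  have arg: "pi * (1 - \<bar>y\<bar>) / 2 = pi / 2 - pi * \<bar>y\<bar> / 2"
    by (simp add: field_simps)
  have "sin (pi * (1 - \<bar>y\<bar>) / 2) = cos (pi * \<bar>y\<bar> / 2)"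
    unfolding arg by (simp add: sin_diff)
  moreover have "cos (pi * \<bar>y\<bar> / 2) = cos (pi * y / 2)"
    by (cases "y \<ge> 0") auto
  moreover have "pi * (1 - \<bar>y\<bar>) / 4 \<le> sin (pi * (1 - \<bar>y\<bar>) / 2)"
    using half_le_sin[of "pi * (1 - \<bar>y\<bar>) / 2"] assms by auto
  moreover have "2 * (1 - \<bar>y\<bar>) \<le> pi * (1 - \<bar>y\<bar>)"
    using assms pi_gt3 by (intro mult_right_mono) auto
  ultimately show ?thesis by linarith
qed

section \<open>Comparison with \<open>cos (pi * y / 2)\<close> by Picone's identity\<close>

lemma abs_diff_le_of_deriv_bound:
  fixes f f' :: "real \<Rightarrow> real"
  assumes "a \<le> b" "continuous_on {a..b} f"
    and "\<And>y. a < y \<Longrightarrow> y < b \<Longrightarrow> (f has_real_derivative f' y) (at y)"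
    and "\<And>y. a < y \<Longrightarrow> y < b \<Longrightarrow> \<bar>f' y\<bar> \<le> B"
  shows "\<bar>f b - f a\<bar> \<le> B * (b - a)"
proof (cases "a = b")
  case False
  then have ab: "a < b" using assms(1) by simp
  obtain l z where z: "a < z" "z < b" "(f has_real_derivative l) (at z)" "f b - f a = (b - a) * l"
    using MVT[OF ab assms(2)] assms(3) real_differentiable_def by meson
  have "l = f' z" using DERIV_unique[OF z(3) assms(3)[OF z(1,2)]] .
  then have "(b - a) * \<bar>l\<bar> \<le> (b - a) * B"
    using assms(4)[OF z(1,2)] ab by (intro mult_left_mono) auto
  then show ?thesis using z(4) ab by (simp add: abs_mult mult.commute)
qed simp

lemma nondecreasing_vanishing_at_ends_imp_zero:
  fixes F :: "real \<Rightarrow> real"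
  assumes mono: "\<And>x y. a < x \<Longrightarrow> x \<le> y \<Longrightarrow> y < b \<Longrightarrow> F x \<le> F y"
    and "(F \<longlongrightarrow> 0) (at_right a)" "(F \<longlongrightarrow> 0) (at_left b)"
    and "a < y" "y < b"
  shows "F y = 0"
proof -
  have "0 \<le> F y"
  proof (rule tendsto_le[OF trivial_limit_at_right_real tendsto_const assms(2)])
    show "\<forall>\<^sub>F x in at_right a. F x \<le> F y"
      using mono \<open>a < y\<close> \<open>y < b\<close> by (intro eventually_at_rightI[of a y]) auto
  qed
  moreover have "F y \<le> 0"
  proof (rule tendsto_le[OF trivial_limit_at_left_real assms(3) tendsto_const])
    show "\<forall>\<^sub>F x in at_left b. F y \<le> F x"
      using mono \<open>a < y\<close> \<open>y < b\<close> by (intro eventually_at_leftI[of y b]) auto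
  qed
  ultimately show ?thesis by simp
qed

lemma picone_identity:
  fixes u v h h' :: "real \<Rightarrow> real"
  assumes "(u has_real_derivative v y) (at y)" "(v has_real_derivative q * u y) (at y)"
    and "(h has_real_derivative h' y) (at y)" "(h' has_real_derivative - (\<kappa> * h y)) (at y)"
    and "h y \<noteq> 0"
  shows "((\<lambda>x. u x * v x - (u x)\<^sup>2 * h' x / h x) has_real_derivative
           (v y - u y * h' y / h y)\<^sup>2 + (q + \<kappa>) * (u y)\<^sup>2) (at y)"
  using assms by (auto intro!: derivative_eq_intros simp: field_simps power2_eq_square)

lemma picone_term_bound:
  fixes u v h h' S w :: real
  assumes "0 < w" "\<bar>u\<bar> \<le> S * w" "\<bar>v\<bar> \<le> S" "w / 2 \<le> h" "\<bar>h'\<bar> \<le> pi / 2"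
  shows "\<bar>u * v - u\<^sup>2 * h' / h\<bar> \<le> (1 + pi) * S\<^sup>2 * w"
proof -
  have "\<bar>u * v\<bar> \<le> S * w * S"
    unfolding abs_mult using assms by (intro mult_mono) auto
  moreover have "u\<^sup>2 \<le> (S * w)\<^sup>2"
    using power_mono[OF assms(2) abs_ge_zero, of 2] by simp
  then have "u\<^sup>2 * \<bar>h'\<bar> \<le> (S * w)\<^sup>2 * (pi / 2)"
    using assms by (intro mult_mono) auto
  then have "u\<^sup>2 * \<bar>h'\<bar> / h \<le> (S * w)\<^sup>2 * (pi / 2) / (w / 2)"
    using assms by (intro frac_le) auto
  moreover have "\<bar>u\<^sup>2 * h' / h\<bar> = u\<^sup>2 * \<bar>h'\<bar> / h"
    using assms by (simp add: abs_mult abs_divide)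
  ultimately have "\<bar>u * v - u\<^sup>2 * h' / h\<bar> \<le> S * w * S + (S * w)\<^sup>2 * (pi / 2) / (w / 2)"
    using abs_triangle_ineq4[of "u * v" "u\<^sup>2 * h' / h"] by linarith
  also have "\<dots> = (1 + pi) * S\<^sup>2 * w"
    using assms by (simp add: field_simps power2_eq_square)
  finally show ?thesis .
qed

text \<open>Picone's function \<open>u v - u\<^sup>2 h' / h\<close> for the comparison function \<open>h y = cos (pi * y / 2)\<close>,
  which solves \<open>h'' = - (pi\<^sup>2 / 4) h\<close> and is positive on \<open>(-1, 1)\<close>.\<close>
definition cos_picone :: "(real \<Rightarrow> real) \<Rightarrow> (real \<Rightarrow> real) \<Rightarrow> real \<Rightarrow> real" where
  "cos_picone u v y = u y * v y + pi / 2 * (u y)\<^sup>2 * tan (pi * y / 2)"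

lemma cos_pos_half_pi:
  assumes "y \<in> {-1<..<1}"
  shows "0 < cos (pi * y / 2)"
proof -
  have "pi * -1 < pi * y" "pi * y < pi * 1"
    using assms by (intro mult_strict_left_mono; simp)+
  then show ?thesis by (intro cos_gt_zero_pi) auto
qed

lemma has_real_derivative_cos_picone:
  assumes "(u has_real_derivative v y) (at y)" "(v has_real_derivative q * u y) (at y)"
    and "cos (pi * y / 2) \<noteq> 0"
  shows "(cos_picone u v has_real_derivative
           (v y + pi / 2 * u y * tan (pi * y / 2))\<^sup>2 + (q + pi\<^sup>2 / 4) * (u y)\<^sup>2) (at y)"
proof -
  define h where "h y = cos (pi * y / 2)" for y
  define h' where "h' y = - (pi / 2) * sin (pi * y / 2)" for y
  have "(h has_real_derivative h' y) (at y)" "(h' has_real_derivative - (pi\<^sup>2 / 4 * h y)) (at y)"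
    unfolding h_def h'_def by (auto intro!: derivative_eq_intros simp: power2_eq_square)
  from picone_identity[OF assms(1,2) this] assms(3)
  have "((\<lambda>x. u x * v x - (u x)\<^sup>2 * h' x / h x) has_real_derivative
          (v y - u y * h' y / h y)\<^sup>2 + (q + pi\<^sup>2 / 4) * (u y)\<^sup>2) (at y)"
    unfolding h_def by simp
  moreover have "(\<lambda>x. u x * v x - (u x)\<^sup>2 * h' x / h x) = cos_picone u v"
    unfolding cos_picone_def h_def h'_def tan_def by (simp add: fun_eq_iff)
  moreover have "v y - u y * h' y / h y = v y + pi / 2 * u y * tan (pi * y / 2)"
    unfolding h_def h'_def tan_def by simp
  ultimately show ?thesis by simp
qed

lemma cos_picone_tendsto_zero:
  fixes u v :: "real \<Rightarrow> real"
  assumes ab: "-1 \<le> a" "a < b" "b \<le> 1"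
    and cont_u: "continuous_on {a..b} u"
    and du: "\<And>y. y \<in> {a<..<b} \<Longrightarrow> (u has_real_derivative v y) (at y)"
    and v_bound: "\<And>y. y \<in> {a<..<b} \<Longrightarrow> \<bar>v y\<bar> \<le> S"
    and ua: "u a = 0" and ub: "u b = 0"
  shows "(cos_picone u v \<longlongrightarrow> 0) (at_right a)" "(cos_picone u v \<longlongrightarrow> 0) (at_left b)"
proof -
  have u_left: "\<bar>u y\<bar> \<le> S * (y - a)" if "y \<in> {a<..<b}" for y
    using abs_diff_le_of_deriv_bound[of a y u v S] that ua du v_bound
      continuous_on_subset[OF cont_u, of "{a..y}"] by auto
  have u_right: "\<bar>u y\<bar> \<le> S * (b - y)" if "y \<in> {a<..<b}" for y
    using abs_diff_le_of_deriv_bound[of y b u v S] that ub du v_bound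
      continuous_on_subset[OF cont_u, of "{y..b}"] by auto
  define C where "C = (1 + pi) * S\<^sup>2"
  have bound: "\<bar>cos_picone u v y\<bar> \<le> C * w"
    if "y \<in> {a<..<b}" "0 < w" "\<bar>u y\<bar> \<le> S * w" "w \<le> 1 - \<bar>y\<bar>" for y w
  proof -
    have "w / 2 \<le> cos (pi * y / 2)"
      using half_distance_to_boundary_le_cos[of y] that ab by auto
    then have "\<bar>u y * v y - (u y)\<^sup>2 * (- (pi / 2) * sin (pi * y / 2)) / cos (pi * y / 2)\<bar> \<le> C * w"
      unfolding C_def using that v_bound by (intro picone_term_bound) (auto simp: abs_mult)
    then show ?thesis
      unfolding cos_picone_def tan_def by (simp add: mult_ac)
  qed
  have left: "\<bar>cos_picone u v y\<bar> \<le> C * (y - a)" if "y \<in> {a<..<(a + b) / 2}" for y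
  proof -
    have "y - a \<le> 1 - \<bar>y\<bar>" using that ab by (cases "0 \<le> y") auto
    then show ?thesis using that by (intro bound u_left) auto
  qed
  show "(cos_picone u v \<longlongrightarrow> 0) (at_right a)"
  proof (rule Lim_null_comparison)
    show "\<forall>\<^sub>F y in at_right a. norm (cos_picone u v y) \<le> C * (y - a)"
      using ab left by (intro eventually_at_rightI[of a "(a + b) / 2"]) auto
    show "((\<lambda>y. C * (y - a)) \<longlongrightarrow> 0) (at_right a)"
      by (auto intro!: tendsto_eq_intros)
  qed
  have right: "\<bar>cos_picone u v y\<bar> \<le> C * (b - y)" if "y \<in> {(a + b) / 2<..<b}" for y
  proof -
    have "b - y \<le> 1 - \<bar>y\<bar>" using that ab by (cases "0 \<le> y") auto
    then show ?thesis using that by (intro bound u_right) auto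
  qed
  show "(cos_picone u v \<longlongrightarrow> 0) (at_left b)"
  proof (rule Lim_null_comparison)
    show "\<forall>\<^sub>F y in at_left b. norm (cos_picone u v y) \<le> C * (b - y)"
      using ab right by (intro eventually_at_leftI[of "(a + b) / 2" b]) auto
    show "((\<lambda>y. C * (b - y)) \<longlongrightarrow> 0) (at_left b)"
      by (auto intro!: tendsto_eq_intros)
  qed
qed

lemma picone_cos_equality:
  fixes u v q :: "real \<Rightarrow> real"
  assumes ab: "-1 \<le> a" "a < b" "b \<le> 1"
    and cont_u: "continuous_on {a..b} u"
    and du: "\<And>y. y \<in> {a<..<b} \<Longrightarrow> (u has_real_derivative v y) (at y)"
    and dv: "\<And>y. y \<in> {a<..<b} \<Longrightarrow> (v has_real_derivative q y * u y) (at y)"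
    and v_bound: "\<And>y. y \<in> {a<..<b} \<Longrightarrow> \<bar>v y\<bar> \<le> S"
    and q_ge: "\<And>y. y \<in> {a<..<b} \<Longrightarrow> - (pi\<^sup>2 / 4) \<le> q y"
    and ua: "u a = 0" and ub: "u b = 0"
  shows "\<forall>y\<in>{a<..<b}. v y = - (pi / 2 * u y * tan (pi * y / 2)) \<and> (q y + pi\<^sup>2 / 4) * (u y)\<^sup>2 = 0"
proof -
  define E where "E y = (v y + pi / 2 * u y * tan (pi * y / 2))\<^sup>2 + (q y + pi\<^sup>2 / 4) * (u y)\<^sup>2" for y
  have in_range: "y \<in> {-1<..<1}" if "y \<in> {a<..<b}" for y
    using that ab by auto
  have dF: "(cos_picone u v has_real_derivative E y) (at y)" if "y \<in> {a<..<b}" for y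
    unfolding E_def using cos_pos_half_pi[OF in_range[OF that]]
    by (intro has_real_derivative_cos_picone du dv that) auto
  have E_nonneg: "0 \<le> E y" if "y \<in> {a<..<b}" for y
    unfolding E_def using q_ge[OF that] by simp
  have F_mono: "cos_picone u v x \<le> cos_picone u v y" if "a < x" "x \<le> y" "y < b" for x y
  proof (rule DERIV_nonneg_imp_increasing_open[OF that(2)])
    fix t assume "x < t" "t < y"
    then have "t \<in> {a<..<b}" using that by auto
    then show "\<exists>D. (cos_picone u v has_real_derivative D) (at t) \<and> 0 \<le> D"
      using dF E_nonneg by blast
  next
    show "continuous_on {x..y} (cos_picone u v)"
      using that by (intro continuous_at_imp_continuous_on ballI DERIV_isCont[OF dF]) auto
  qed
  have F_zero: "cos_picone u v x = 0" if "x \<in> {a<..<b}" for x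
    using that F_mono cos_picone_tendsto_zero[OF ab cont_u du v_bound ua ub]
    by (intro nondecreasing_vanishing_at_ends_imp_zero[of a b]) auto
  show ?thesis
  proof
    fix y assume y: "y \<in> {a<..<b}"
    have "((\<lambda>_. 0) has_real_derivative E y) (at y)"
      using F_zero by (intro has_field_derivative_transform_within_open[OF dF[OF y], of "{a<..<b}"]) (use y in auto)
    then have "E y = 0" using DERIV_const DERIV_unique by blast
    moreover have "0 \<le> (q y + pi\<^sup>2 / 4) * (u y)\<^sup>2"
      using q_ge[OF y] by simp
    ultimately have "(v y + pi / 2 * u y * tan (pi * y / 2))\<^sup>2 = 0 \<and> (q y + pi\<^sup>2 / 4) * (u y)\<^sup>2 = 0"
      unfolding E_def by (simp add: add_nonneg_eq_0_iff)
    then show "v y = - (pi / 2 * u y * tan (pi * y / 2)) \<and> (q y + pi\<^sup>2 / 4) * (u y)\<^sup>2 = 0"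
      by (simp add: add_eq_0_iff)
  qed
qed

lemma picone_cos_comparison:
  fixes u v q :: "real \<Rightarrow> real"
  assumes ab: "-1 \<le> a" "a < b" "b \<le> 1"
    and cont_u: "continuous_on {a..b} u"
    and du: "\<And>y. y \<in> {a<..<b} \<Longrightarrow> (u has_real_derivative v y) (at y)"
    and dv: "\<And>y. y \<in> {a<..<b} \<Longrightarrow> (v has_real_derivative q y * u y) (at y)"
    and v_bound: "\<And>y. y \<in> {a<..<b} \<Longrightarrow> \<bar>v y\<bar> \<le> S"
    and q_ge: "\<And>y. y \<in> {a<..<b} \<Longrightarrow> - (pi\<^sup>2 / 4) \<le> q y"
    and ua: "u a = 0" and ub: "u b = 0"
  shows "\<exists>k. \<forall>y\<in>{a<..<b}. u y = k * cos (pi * y / 2)"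
    and "\<forall>y\<in>{a<..<b}. (q y + pi\<^sup>2 / 4) * (u y)\<^sup>2 = 0"
proof -
  note tangent = picone_cos_equality[OF assms]
  then show "\<forall>y\<in>{a<..<b}. (q y + pi\<^sup>2 / 4) * (u y)\<^sup>2 = 0"
    by blast
  have in_range: "y \<in> {-1<..<1}" if "y \<in> {a<..<b}" for y
    using that ab by auto
  have "((\<lambda>y. u y / cos (pi * y / 2)) has_real_derivative 0) (at y within {a<..<b})"
    if "y \<in> {a<..<b}" for y
  proof -
    have cos_pos: "0 < cos (pi * y / 2)" using cos_pos_half_pi[OF in_range[OF that]] .
    have "((\<lambda>y. u y / cos (pi * y / 2)) has_real_derivative
        (v y * cos (pi * y / 2) + u y * (pi / 2 * sin (pi * y / 2))) / (cos (pi * y / 2))\<^sup>2) (at y)"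
      using cos_pos by (auto intro!: derivative_eq_intros du[OF that] simp: power2_eq_square)
    moreover have "v y * cos (pi * y / 2) + u y * (pi / 2 * sin (pi * y / 2)) = 0"
      using tangent that cos_pos by (simp add: tan_def)
    ultimately show ?thesis by (auto intro: has_field_derivative_at_within)
  qed
  then obtain k where k: "\<forall>y\<in>{a<..<b}. u y / cos (pi * y / 2) = k"
    using has_field_derivative_zero_constant[of "{a<..<b}"] by blast
  have "u y = k * cos (pi * y / 2)" if "y \<in> {a<..<b}" for y
    using k that cos_pos_half_pi[OF in_range[OF that]] by (simp add: divide_eq_eq)
  then show "\<exists>k. \<forall>y\<in>{a<..<b}. u y = k * cos (pi * y / 2)" by blast
qed

section \<open>Second order equations with singular coefficients\<close>

text \<open>With \<open>S = max \<bar>v\<bar>\<close> near \<open>a\<close>, the bound \<open>\<bar>u y\<bar> \<le> S (y - a)\<close> gives \<open>\<bar>g\<bar> \<le> M S\<close>,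
  hence \<open>S \<le> S / 2\<close>.\<close>
lemma zero_of_vanishing_data_near:
  fixes u v g :: "real \<Rightarrow> real"
  assumes "a < b" and cont_u: "continuous_on {a..b} u" and cont_v: "continuous_on {a..b} v"
    and du: "\<And>y. y \<in> {a<..<b} \<Longrightarrow> (u has_real_derivative v y) (at y)"
    and dv: "\<And>y. y \<in> {a<..<b} \<Longrightarrow> (v has_real_derivative g y) (at y)"
    and g_bound: "\<And>y. y \<in> {a<..<b} \<Longrightarrow> \<bar>g y\<bar> \<le> M * \<bar>u y\<bar> / (y - a)"
    and "0 < M" and ua: "u a = 0" and va: "v a = 0"
  shows "\<forall>y\<in>{a..min b (a + 1 / (2 * M))}. u y = 0 \<and> v y = 0"
proof -
  define e where "e = min b (a + 1 / (2 * M))"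
  have e: "a < e" "e \<le> b" "e - a \<le> 1 / (2 * M)"
    unfolding e_def using assms by auto
  have "continuous_on {a..e} (\<lambda>y. \<bar>v y\<bar>)"
    using continuous_on_subset[OF cont_v] e by (intro continuous_intros) auto
  then obtain x0 where x0: "x0 \<in> {a..e}" "\<And>y. y \<in> {a..e} \<Longrightarrow> \<bar>v y\<bar> \<le> \<bar>v x0\<bar>"
    using continuous_attains_sup[of "{a..e}" "\<lambda>y. \<bar>v y\<bar>"] e by auto
  define S where "S = \<bar>v x0\<bar>"
  have u_bound: "\<bar>u y\<bar> \<le> S * (y - a)" if "y \<in> {a..e}" for y
    using abs_diff_le_of_deriv_bound[of a y u v S] that e ua du x0(2)
      continuous_on_subset[OF cont_u, of "{a..y}"] unfolding S_def by auto
  have g_bound': "\<bar>g y\<bar> \<le> M * S" if "y \<in> {a<..<e}" for y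
  proof -
    have "\<bar>g y\<bar> \<le> M * \<bar>u y\<bar> / (y - a)" using g_bound that e by auto
    also have "\<dots> \<le> M * (S * (y - a)) / (y - a)"
      using u_bound[of y] that \<open>0 < M\<close> by (intro divide_right_mono mult_left_mono) auto
    also have "\<dots> = M * S" using that by auto
    finally show ?thesis .
  qed
  have "S \<le> (M * S) * (x0 - a)"
    using abs_diff_le_of_deriv_bound[of a x0 v g "M * S"] x0 e va dv g_bound'
      continuous_on_subset[OF cont_v, of "{a..x0}"] unfolding S_def by auto
  also have "\<dots> \<le> (M * S) * (1 / (2 * M))"
    using x0 e \<open>0 < M\<close> unfolding S_def by (intro mult_left_mono) auto
  also have "\<dots> = S / 2" using \<open>0 < M\<close> by simp
  finally have "S = 0" unfolding S_def by simp
  then show ?thesis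
    using u_bound x0(2) unfolding e_def S_def by fastforce
qed

lemma zero_of_vanishing_data_iterate:
  fixes u v g :: "real \<Rightarrow> real"
  assumes "a < b" and cont_u: "continuous_on {a..b} u" and cont_v: "continuous_on {a..b} v"
    and du: "\<And>y. y \<in> {a<..<b} \<Longrightarrow> (u has_real_derivative v y) (at y)"
    and dv: "\<And>y. y \<in> {a<..<b} \<Longrightarrow> (v has_real_derivative g y) (at y)"
    and g_bound: "\<And>y. y \<in> {a<..<b} \<Longrightarrow> \<bar>g y\<bar> \<le> M * \<bar>u y\<bar> / (y - a)"
    and "0 < M" and "u a = 0" and "v a = 0"
  shows "\<forall>y\<in>{a..min b (a + real n / (2 * M))}. u y = 0 \<and> v y = 0"
proof (induction n)
  case 0
  then show ?case using assms by auto
next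
  case (Suc n)
  define a' where "a' = min b (a + real n / (2 * M))"
  have IH: "\<forall>y\<in>{a..a'}. u y = 0 \<and> v y = 0" using Suc.IH unfolding a'_def .
  have "a \<le> a'" unfolding a'_def using assms by auto
  show ?case
  proof (cases "a' < b")
    case False
    then show ?thesis using IH unfolding a'_def by auto
  next
    case True
    have step: "\<forall>y\<in>{a'..min b (a' + 1 / (2 * M))}. u y = 0 \<and> v y = 0"
    proof (rule zero_of_vanishing_data_near[OF True])
      show "continuous_on {a'..b} u" "continuous_on {a'..b} v"
        using continuous_on_subset[OF cont_u] continuous_on_subset[OF cont_v] \<open>a \<le> a'\<close> by auto
      show "\<bar>g y\<bar> \<le> M * \<bar>u y\<bar> / (y - a')" if "y \<in> {a'<..<b}" for y
      proof -
        have "\<bar>g y\<bar> \<le> M * \<bar>u y\<bar> / (y - a)" using g_bound that \<open>a \<le> a'\<close> by auto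
        also have "\<dots> \<le> M * \<bar>u y\<bar> / (y - a')"
          using that \<open>a \<le> a'\<close> \<open>0 < M\<close> by (intro divide_left_mono) auto
        finally show ?thesis .
      qed
    qed (use IH \<open>a \<le> a'\<close> du dv \<open>0 < M\<close> in auto)
    have "a' = a + real n / (2 * M)"
      using True unfolding a'_def by auto
    then have "a' + 1 / (2 * M) = a + real (Suc n) / (2 * M)"
      by (simp add: add_divide_distrib)
    then have "{a..min b (a + real (Suc n) / (2 * M))} \<subseteq> {a..a'} \<union> {a'..min b (a' + 1 / (2 * M))}"
      by auto
    then show ?thesis using IH step by blast
  qed
qed

lemma zero_of_vanishing_data_at_left:
  fixes u v g :: "real \<Rightarrow> real"
  assumes "a < b" and cont_u: "continuous_on {a..b} u" and cont_v: "continuous_on {a..b} v"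
    and du: "\<And>y. y \<in> {a<..<b} \<Longrightarrow> (u has_real_derivative v y) (at y)"
    and dv: "\<And>y. y \<in> {a<..<b} \<Longrightarrow> (v has_real_derivative g y) (at y)"
    and g_bound: "\<And>y. y \<in> {a<..<b} \<Longrightarrow> \<bar>g y\<bar> \<le> M * \<bar>u y\<bar> / (y - a)"
    and "0 < M" and "u a = 0" and "v a = 0"
  shows "\<forall>y\<in>{a..b}. u y = 0"
proof -
  obtain n :: nat where "2 * M * (b - a) < real n"
    using reals_Archimedean2 by blast
  then have "min b (a + real n / (2 * M)) = b"
    using \<open>0 < M\<close> by (simp add: field_simps)
  then show ?thesis
    using zero_of_vanishing_data_iterate[OF assms, of n] by simp
qed

lemma zero_of_vanishing_data_at_right:
  fixes u v g :: "real \<Rightarrow> real"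
  assumes "a < b" and cont_u: "continuous_on {a..b} u" and cont_v: "continuous_on {a..b} v"
    and du: "\<And>y. y \<in> {a<..<b} \<Longrightarrow> (u has_real_derivative v y) (at y)"
    and dv: "\<And>y. y \<in> {a<..<b} \<Longrightarrow> (v has_real_derivative g y) (at y)"
    and g_bound: "\<And>y. y \<in> {a<..<b} \<Longrightarrow> \<bar>g y\<bar> \<le> M * \<bar>u y\<bar> / (b - y)"
    and "0 < M" and "u b = 0" and "v b = 0"
  shows "\<forall>y\<in>{a..b}. u y = 0"
proof -
  have "\<forall>y\<in>{-b..-a}. u (- y) = 0"
  proof (rule zero_of_vanishing_data_at_left[where v = "\<lambda>y. - v (- y)" and g = "\<lambda>y. g (- y)" and M = M])
    show "continuous_on {-b..-a} (\<lambda>y. u (- y))" "continuous_on {-b..-a} (\<lambda>y. - v (- y))"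
      by (auto intro!: continuous_intros continuous_on_compose2[OF cont_u]
          continuous_on_compose2[OF cont_v])
    show "((\<lambda>y. u (- y)) has_real_derivative - v (- y)) (at y)" if "y \<in> {-b<..<-a}" for y
      using DERIV_chain2[OF du DERIV_minus[OF DERIV_ident], of y] that by simp
    show "((\<lambda>y. - v (- y)) has_real_derivative g (- y)) (at y)" if "y \<in> {-b<..<-a}" for y
      using DERIV_minus[OF DERIV_chain2[OF dv DERIV_minus[OF DERIV_ident], of y]] that by simp
    show "\<bar>g (- y)\<bar> \<le> M * \<bar>u (- y)\<bar> / (y - - b)" if "y \<in> {-b<..<-a}" for y
      using g_bound[of "- y"] that by (simp add: add.commute)
  qed (use assms in auto)
  then show ?thesis
    by (metis atLeastAtMost_iff minus_minus neg_le_iff_le)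
qed

lemma unbounded_below_of_deriv_ge_inverse:
  fixes f f' :: "real \<Rightarrow> real"
  assumes "z < d" "0 < C"
    and df: "\<And>y. y \<in> {z<..<d} \<Longrightarrow> (f has_real_derivative f' y) (at y)"
    and f'_ge: "\<And>y. y \<in> {z<..<d} \<Longrightarrow> C / (y - z) \<le> f' y"
  shows "\<exists>y\<in>{z<..<d}. f y < B"
proof -
  define G where "G y = f y - C * ln (y - z)" for y
  have dG: "(G has_real_derivative f' y - C / (y - z)) (at y)" if "y \<in> {z<..<d}" for y
    unfolding G_def[abs_def] using that
    by (auto intro!: derivative_eq_intros df simp: field_simps)
  define y1 where "y1 = (z + d) / 2"
  have G_mono: "G y \<le> G y1" if "z < y" "y \<le> y1" for y
  proof (rule DERIV_nonneg_imp_increasing_open[OF that(2)])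
    fix t assume "y < t" "t < y1"
    then have "t \<in> {z<..<d}" using that unfolding y1_def by auto
    then show "\<exists>D. (G has_real_derivative D) (at t) \<and> 0 \<le> D" using dG f'_ge by force
  next
    show "continuous_on {y..y1} G"
      using that unfolding y1_def
      by (intro continuous_at_imp_continuous_on ballI DERIV_isCont[OF dG]) auto
  qed
  define t where "t = min ((d - z) / 2) (exp ((B - 1 - G y1) / C))"
  have "t \<le> (d - z) / 2" unfolding t_def by (rule min.cobounded1)
  moreover have "0 < t" unfolding t_def using \<open>z < d\<close> by simp
  ultimately have t: "0 < t" "t \<le> (d - z) / 2" by simp_all
  have "ln t \<le> ln (exp ((B - 1 - G y1) / C))"
    using t(1) by (subst ln_le_cancel_iff) (auto simp: t_def)
  then have "C * ln t \<le> B - 1 - G y1"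
    using \<open>0 < C\<close> by (simp add: field_simps)
  moreover have "G (z + t) \<le> G y1"
    using G_mono[of "z + t"] t unfolding y1_def by auto
  moreover have "G (z + t) = f (z + t) - C * ln t" unfolding G_def by simp
  ultimately have "f (z + t) < B" by linarith
  moreover have "z + t \<in> {z<..<d}" using t by auto
  ultimately show ?thesis by blast
qed

text \<open>If \<open>u z \<noteq> 0\<close>, then \<open>v' = q u\<close> is not integrable at \<open>z\<close>, contradicting the continuity of \<open>v\<close>.\<close>
lemma zero_at_nonintegrable_singularity:
  fixes u v q :: "real \<Rightarrow> real"
  assumes "0 < \<delta>" and cont_u: "continuous_on {z..z + \<delta>} u" and cont_v: "continuous_on {z..z + \<delta>} v"
    and dv: "\<And>y. y \<in> {z<..<z + \<delta>} \<Longrightarrow> (v has_real_derivative q y * u y) (at y)"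
    and q_sing: "\<And>y. y \<in> {z<..<z + \<delta>} \<Longrightarrow> m / (y - z) \<le> s * q y"
    and "0 < m"
  shows "u z = 0"
proof (rule ccontr)
  assume "u z \<noteq> 0"
  define p where "p = u z"
  have "0 < p * p" using \<open>u z \<noteq> 0\<close> unfolding p_def by (metis not_real_square_gt_zero)
  have "(u \<longlongrightarrow> p) (at z within {z..z + \<delta>})"
    using cont_u \<open>0 < \<delta>\<close> unfolding p_def continuous_on_def by simp
  then have "(u \<longlongrightarrow> p) (at_right z)"
    using \<open>0 < \<delta>\<close> by (simp add: at_within_Icc_at_right)
  then have "((\<lambda>y. p * u y) \<longlongrightarrow> p * p) (at_right z)"
    by (intro tendsto_mult tendsto_const)
  then have "\<forall>\<^sub>F y in at_right z. p * p / 2 < p * u y"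
    using \<open>0 < p * p\<close> by (intro order_tendstoD(1)) auto
  then obtain b where b: "z < b" "\<And>y. z < y \<Longrightarrow> y < b \<Longrightarrow> p * p / 2 < p * u y"
    unfolding eventually_at_right_field by blast
  define d where "d = min b (z + \<delta>)"
  have d: "z < d" "d \<le> z + \<delta>" "\<And>y. z < y \<Longrightarrow> y < d \<Longrightarrow> p * p / 2 \<le> p * u y"
    using b \<open>0 < \<delta>\<close> unfolding d_def by (auto intro: less_imp_le)
  have "continuous_on {z..z + \<delta>} (\<lambda>y. \<bar>s * p * v y\<bar>)"
    using cont_v by (intro continuous_intros)
  then obtain x0 where x0: "\<forall>y\<in>{z..z + \<delta>}. \<bar>s * p * v y\<bar> \<le> \<bar>s * p * v x0\<bar>"
    using continuous_attains_sup[of "{z..z + \<delta>}" "\<lambda>y. \<bar>s * p * v y\<bar>"] \<open>0 < \<delta>\<close> by auto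
  have "\<exists>y\<in>{z<..<d}. s * p * v y < - \<bar>s * p * v x0\<bar>"
  proof (rule unbounded_below_of_deriv_ge_inverse[OF d(1)])
    show "0 < m * (p * p / 2)" using \<open>0 < m\<close> \<open>0 < p * p\<close> by simp
    show "((\<lambda>y. s * p * v y) has_real_derivative s * p * (q y * u y)) (at y)" if "y \<in> {z<..<d}" for y
      using that d by (auto intro!: derivative_eq_intros dv)
    show "m * (p * p / 2) / (y - z) \<le> s * p * (q y * u y)" if "y \<in> {z<..<d}" for y
    proof -
      have "0 < m / (y - z)" "m / (y - z) \<le> s * q y" "p * p / 2 \<le> p * u y"
        using q_sing[of y] d that \<open>0 < m\<close> by auto
      then have "m / (y - z) * (p * p / 2) \<le> s * q y * (p * u y)"
        using \<open>0 < p * p\<close> by (intro mult_mono) auto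
      then show ?thesis by (simp add: algebra_simps)
    qed
  qed
  then obtain y where "y \<in> {z<..<d}" "s * p * v y < - \<bar>s * p * v x0\<bar>" by blast
  moreover have "\<bar>s * p * v y\<bar> \<le> \<bar>s * p * v x0\<bar>"
    using x0 \<open>y \<in> {z<..<d}\<close> d(2) by auto
  ultimately show False by linarith
qed

section \<open>The sinus flow and its potential\<close>

definition U_beta :: "real \<Rightarrow> real" where
  "U_beta \<beta> = 1/2 - \<beta> / pi\<^sup>2"

definition sinus_potential :: "real \<Rightarrow> real \<Rightarrow> real \<Rightarrow> real \<Rightarrow> real" where
  "sinus_potential \<alpha> \<beta> c y = \<alpha>\<^sup>2 - pi\<^sup>2 - pi\<^sup>2 * (c - U_beta \<beta>) / (sinus_flow y - c)"

definition critical_point :: "real \<Rightarrow> real" where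
  "critical_point c = arccos (2 * c - 1) / pi"

lemma sinus_flow_abs: "sinus_flow y = (1 + cos (pi * \<bar>y\<bar>)) / 2"
  unfolding sinus_flow_def by (cases "0 \<le> y") auto

lemma sinus_flow_minus [simp]: "sinus_flow (- y) = sinus_flow y"
  unfolding sinus_flow_def by simp

lemma sinus_flow_le_one: "sinus_flow y \<le> 1"
  unfolding sinus_flow_def by simp

lemma sinus_flow_pos:
  assumes "\<bar>y\<bar> < 1"
  shows "0 < sinus_flow y"
proof -
  have "pi * \<bar>y\<bar> < pi * 1" using assms by (intro mult_strict_left_mono) auto
  then have "cos pi < cos (pi * \<bar>y\<bar>)" by (subst cos_mono_less_eq) auto
  then show ?thesis unfolding sinus_flow_abs by simp
qed

lemma sinus_flow_lipschitz: "\<bar>sinus_flow y - sinus_flow z\<bar> \<le> pi / 2 * \<bar>y - z\<bar>"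
proof -
  have "\<bar>cos (pi * y) - cos (pi * z)\<bar> = 2 * \<bar>sin ((pi * y + pi * z) / 2)\<bar> * \<bar>sin ((pi * z - pi * y) / 2)\<bar>"
    by (simp add: cos_diff_cos abs_mult)
  also have "\<dots> \<le> 2 * 1 * \<bar>(pi * z - pi * y) / 2\<bar>"
    by (intro mult_mono abs_sin_le_one abs_sin_x_le_abs_x) auto
  also have "\<dots> = pi * \<bar>y - z\<bar>"
    by (simp add: abs_mult abs_minus_commute flip: right_diff_distrib)
  finally show ?thesis
    unfolding sinus_flow_def by (simp add: field_simps)
qed

lemma deriv2_sinus_flow: "deriv (deriv sinus_flow) y = - (pi\<^sup>2 / 2) * cos (pi * y)"
proof -
  have "deriv sinus_flow = (\<lambda>y. - (pi / 2) * sin (pi * y))"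
  proof
    fix y :: real
    have "(sinus_flow has_real_derivative - (pi / 2) * sin (pi * y)) (at y)"
      unfolding sinus_flow_def[abs_def] by (auto intro!: derivative_eq_intros)
    then show "deriv sinus_flow y = - (pi / 2) * sin (pi * y)" by (rule DERIV_imp_deriv)
  qed
  moreover have "((\<lambda>y. - (pi / 2) * sin (pi * y)) has_real_derivative - (pi\<^sup>2 / 2) * cos (pi * y)) (at y)"
    by (auto intro!: derivative_eq_intros simp: power2_eq_square)
  ultimately show ?thesis by (simp add: DERIV_imp_deriv)
qed

text \<open>Since \<open>\<beta> - U'' = pi\<^sup>2 (U - U_beta \<beta>)\<close>, the Rayleigh-Kuo equation reads \<open>\<phi>'' = q \<phi>\<close>
  with the potential \<open>q = sinus_potential \<alpha> \<beta> c\<close>.\<close>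
lemma rayleigh_kuo_coefficient_eq:
  assumes "sinus_flow y \<noteq> c"
  shows "\<alpha>\<^sup>2 - (\<beta> - deriv (deriv sinus_flow) y) / (sinus_flow y - c) = sinus_potential \<alpha> \<beta> c y"
proof -
  have "\<beta> - deriv (deriv sinus_flow) y = pi\<^sup>2 * (sinus_flow y - c) + pi\<^sup>2 * (c - U_beta \<beta>)"
    unfolding deriv2_sinus_flow U_beta_def sinus_flow_def by (simp add: field_simps)
  then show ?thesis
    using assms unfolding sinus_potential_def by (simp add: add_divide_distrib)
qed

lemma U_beta_bounds:
  assumes "- (pi\<^sup>2 / 2) \<le> \<beta>" "\<beta> \<le> pi\<^sup>2 / 2"
  shows "0 \<le> U_beta \<beta>" "U_beta \<beta> \<le> 1"
  using assms unfolding U_beta_def by (simp_all add: field_simps)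

lemma sinus_potential_U_beta: "sinus_potential \<alpha> \<beta> (U_beta \<beta>) y = \<alpha>\<^sup>2 - pi\<^sup>2"
  unfolding sinus_potential_def by simp

lemma sinus_potential_gt:
  assumes "3 * pi\<^sup>2 / 4 \<le> \<alpha>\<^sup>2" and "(c - U_beta \<beta>) * (sinus_flow y - c) < 0"
  shows "- (pi\<^sup>2 / 4) < sinus_potential \<alpha> \<beta> c y"
proof -
  have "(c - U_beta \<beta>) / (sinus_flow y - c) < 0"
    using assms(2) by (simp add: divide_less_0_iff mult_less_0_iff)
  then have "pi\<^sup>2 * ((c - U_beta \<beta>) / (sinus_flow y - c)) < 0"
    by (rule mult_pos_neg[rotated]) simp
  then show ?thesis
    using assms(1) unfolding sinus_potential_def times_divide_eq_right by linarith
qed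

lemma critical_point:
  assumes "0 < c" "c \<le> 1"
  shows "0 \<le> critical_point c" "critical_point c < 1"
    and "cos (pi * critical_point c) = 2 * c - 1"
    and "sinus_flow (critical_point c) = c"
    and "\<And>y. \<bar>y\<bar> \<le> 1 \<Longrightarrow> c < sinus_flow y \<longleftrightarrow> \<bar>y\<bar> < critical_point c"
    and "\<And>y. \<bar>y\<bar> \<le> 1 \<Longrightarrow> sinus_flow y < c \<longleftrightarrow> critical_point c < \<bar>y\<bar>"
proof -
  have "0 \<le> arccos (2 * c - 1)" "arccos (2 * c - 1) < pi"
    using assms arccos_lt_bounded[of "2 * c - 1"] by (cases "c = 1"; auto)+
  then show w: "0 \<le> critical_point c" "critical_point c < 1"
    unfolding critical_point_def by (auto simp: field_simps)
  show cos_w: "cos (pi * critical_point c) = 2 * c - 1"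
    unfolding critical_point_def using assms by (simp add: cos_arccos)
  then show "sinus_flow (critical_point c) = c"
    unfolding sinus_flow_def by simp
  have diff: "sinus_flow y - c = (cos (pi * \<bar>y\<bar>) - cos (pi * critical_point c)) / 2" for y
    unfolding sinus_flow_abs cos_w by (simp add: field_simps)
  fix y :: real assume "\<bar>y\<bar> \<le> 1"
  then have range: "0 \<le> pi * \<bar>y\<bar>" "pi * \<bar>y\<bar> \<le> pi" "0 \<le> pi * critical_point c" "pi * critical_point c \<le> pi"
    using w by (auto simp: mult_le_cancel_left1)
  have "c < sinus_flow y \<longleftrightarrow> 0 < sinus_flow y - c" by simp
  also have "\<dots> \<longleftrightarrow> cos (pi * critical_point c) < cos (pi * \<bar>y\<bar>)"
    unfolding diff by simp
  also have "\<dots> \<longleftrightarrow> pi * \<bar>y\<bar> < pi * critical_point c"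
    using range by (intro cos_mono_less_eq) auto
  finally show "c < sinus_flow y \<longleftrightarrow> \<bar>y\<bar> < critical_point c"
    by simp
  have "sinus_flow y < c \<longleftrightarrow> sinus_flow y - c < 0" by simp
  also have "\<dots> \<longleftrightarrow> cos (pi * \<bar>y\<bar>) < cos (pi * critical_point c)"
    unfolding diff by simp
  also have "\<dots> \<longleftrightarrow> pi * critical_point c < pi * \<bar>y\<bar>"
    using range by (intro cos_mono_less_eq) auto
  finally show "sinus_flow y < c \<longleftrightarrow> critical_point c < \<bar>y\<bar>"
    by simp
qed

lemma sinus_flow_sub_linear_lower_bound:
  assumes "0 < c" "c < 1"
  obtains K where "0 < K"
    and "\<And>y. \<bar>y\<bar> \<le> 1 \<Longrightarrow> K * \<bar>\<bar>y\<bar> - critical_point c\<bar> \<le> \<bar>sinus_flow y - c\<bar>"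
proof
  define w where "w = critical_point c"
  have cos_w: "cos (pi * w) = 2 * c - 1"
    using critical_point(3)[of c] assms unfolding w_def by simp
  then have "w \<noteq> 0" using assms by auto
  then have w: "0 < w" "w < 1"
    using critical_point(1,2)[of c] assms unfolding w_def by auto
  show "0 < pi * min (pi * w) (pi - pi * w) / 16"
    using w by auto
  fix y :: real assume y: "\<bar>y\<bar> \<le> 1"
  have "pi * min (pi * w) (pi - pi * w) / 16 * \<bar>\<bar>y\<bar> - w\<bar>
      = min (pi * w) (pi - pi * w) * \<bar>pi * \<bar>y\<bar> - pi * w\<bar> / 8 / 2"
    by (simp add: abs_mult flip: right_diff_distrib)
  also have "\<dots> \<le> \<bar>cos (pi * \<bar>y\<bar>) - cos (pi * w)\<bar> / 2"
    using y w by (intro divide_right_mono cos_diff_lower_bound) (auto simp: mult_le_cancel_left1)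
  also have "\<dots> = \<bar>sinus_flow y - c\<bar>"
    unfolding sinus_flow_abs cos_w by (simp add: field_simps)
  finally show "pi * min (pi * w) (pi - pi * w) / 16 * \<bar>\<bar>y\<bar> - critical_point c\<bar>
      \<le> \<bar>sinus_flow y - c\<bar>"
    unfolding w_def .
qed

lemma negligible_sinus_flow_level_set: "negligible {y \<in> {-1<..<1}. sinus_flow y = c}"
proof (rule negligible_subset[of "{critical_point c, - critical_point c}"])
  show "{y \<in> {-1<..<1}. sinus_flow y = c} \<subseteq> {critical_point c, - critical_point c}"
  proof
    fix y assume y: "y \<in> {y \<in> {-1<..<1}. sinus_flow y = c}"
    then have "cos (pi * \<bar>y\<bar>) = 2 * c - 1" unfolding sinus_flow_abs by auto
    moreover have "0 \<le> pi * \<bar>y\<bar>" "pi * \<bar>y\<bar> \<le> pi" using y by (auto simp: mult_le_cancel_left1)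
    ultimately have "arccos (2 * c - 1) = pi * \<bar>y\<bar>" using arccos_cos by metis
    then have "\<bar>y\<bar> = critical_point c" unfolding critical_point_def by simp
    then show "y \<in> {critical_point c, - critical_point c}" by (cases "0 \<le> y") auto
  qed
qed auto

lemma sinus_potential_bound:
  assumes "0 < k" "0 < w" "w \<le> 2" "k * w \<le> \<bar>sinus_flow y - c\<bar>"
  shows "\<bar>sinus_potential \<alpha> \<beta> c y\<bar> \<le> (2 * \<bar>\<alpha>\<^sup>2 - pi\<^sup>2\<bar> + pi\<^sup>2 * \<bar>c - U_beta \<beta>\<bar> / k) / w"
proof -
  have "\<bar>sinus_potential \<alpha> \<beta> c y\<bar> \<le> \<bar>\<alpha>\<^sup>2 - pi\<^sup>2\<bar> + pi\<^sup>2 * \<bar>c - U_beta \<beta>\<bar> / \<bar>sinus_flow y - c\<bar>"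
    unfolding sinus_potential_def
    using abs_triangle_ineq4[of "\<alpha>\<^sup>2 - pi\<^sup>2" "pi\<^sup>2 * (c - U_beta \<beta>) / (sinus_flow y - c)"]
    by (simp add: abs_mult abs_divide)
  also have "\<dots> \<le> 2 * \<bar>\<alpha>\<^sup>2 - pi\<^sup>2\<bar> / w + pi\<^sup>2 * \<bar>c - U_beta \<beta>\<bar> / (k * w)"
  proof (rule add_mono)
    show "\<bar>\<alpha>\<^sup>2 - pi\<^sup>2\<bar> \<le> 2 * \<bar>\<alpha>\<^sup>2 - pi\<^sup>2\<bar> / w"
      using assms mult_left_mono[of w 2 "\<bar>\<alpha>\<^sup>2 - pi\<^sup>2\<bar>"] by (simp add: field_simps)
    show "pi\<^sup>2 * \<bar>c - U_beta \<beta>\<bar> / \<bar>sinus_flow y - c\<bar> \<le> pi\<^sup>2 * \<bar>c - U_beta \<beta>\<bar> / (k * w)"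
    proof -
      have kw: "0 < k * w" using assms by simp
      then have "0 < \<bar>sinus_flow y - c\<bar>" using assms(4) by linarith
      then have pos: "0 < \<bar>sinus_flow y - c\<bar> * (k * w)" using kw by (rule mult_pos_pos)
      show ?thesis by (rule divide_left_mono[OF assms(4) _ pos]) simp
    qed
  qed
  also have "\<dots> = (2 * \<bar>\<alpha>\<^sup>2 - pi\<^sup>2\<bar> + pi\<^sup>2 * \<bar>c - U_beta \<beta>\<bar> / k) / w"
    by (simp add: add_divide_distrib)
  finally show ?thesis .
qed

lemma signed_sinus_potential:
  assumes "\<bar>e\<bar> = 1" "e * (sinus_flow y - c) = \<bar>sinus_flow y - c\<bar>" "sinus_flow y \<noteq> c"
  shows "- e * sgn (c - U_beta \<beta>) * sinus_potential \<alpha> \<beta> c y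
    = - e * sgn (c - U_beta \<beta>) * (\<alpha>\<^sup>2 - pi\<^sup>2) + pi\<^sup>2 * \<bar>c - U_beta \<beta>\<bar> / \<bar>sinus_flow y - c\<bar>"
proof -
  define X where "X = sinus_flow y - c"
  define d where "d = c - U_beta \<beta>"
  have "e * e = 1" using assms(1) by (simp add: abs_eq_iff' square_eq_1_iff)
  then have "e * \<bar>X\<bar> = X" using assms(2) unfolding X_def by (metis mult.assoc mult_1)
  moreover have "X \<noteq> 0" using assms(3) unfolding X_def by simp
  ultimately have key: "- e * sgn d * d / X = - (\<bar>d\<bar> / \<bar>X\<bar>)"
    unfolding abs_sgn[of d] by (simp add: field_simps)
  have "- e * sgn d * sinus_potential \<alpha> \<beta> c y = - e * sgn d * (\<alpha>\<^sup>2 - pi\<^sup>2) - pi\<^sup>2 * (- e * sgn d * d / X)"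
    unfolding sinus_potential_def X_def[symmetric] d_def[symmetric] by (simp add: algebra_simps)
  also have "\<dots> = - e * sgn d * (\<alpha>\<^sup>2 - pi\<^sup>2) + pi\<^sup>2 * \<bar>d\<bar> / \<bar>X\<bar>"
    unfolding key by simp
  finally show ?thesis unfolding X_def d_def .
qed

lemma sinus_potential_pole:
  assumes "0 < \<delta>" "c \<noteq> U_beta \<beta>" "sinus_flow z = c"
    and sign: "(\<forall>y\<in>{z<..<z + \<delta>}. c < sinus_flow y) \<or> (\<forall>y\<in>{z<..<z + \<delta>}. sinus_flow y < c)"
  obtains \<delta>' s m where "0 < \<delta>'" "\<delta>' \<le> \<delta>" "0 < m"
    and "\<And>y. y \<in> {z<..<z + \<delta>'} \<Longrightarrow> m / (y - z) \<le> s * sinus_potential \<alpha> \<beta> c y"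
proof -
  define d where "d = c - U_beta \<beta>"
  define A where "A = \<bar>\<alpha>\<^sup>2 - pi\<^sup>2\<bar>"
  obtain e :: real where e: "\<bar>e\<bar> = 1"
    and e_abs: "\<And>y. y \<in> {z<..<z + \<delta>} \<Longrightarrow> e * (sinus_flow y - c) = \<bar>sinus_flow y - c\<bar>"
    using sign by (metis abs_minus_cancel abs_of_neg abs_of_pos abs_one diff_gt_0_iff_gt
        diff_less_0_iff_less mult_1 mult_minus1)
  define s where "s = - e * sgn d"
  define \<delta>' where "\<delta>' = min \<delta> (pi * \<bar>d\<bar> / (A + 1))"
  have "0 < \<bar>d\<bar>" "0 \<le> A" using assms unfolding d_def A_def by auto
  then have "0 < \<delta>'" "\<delta>' \<le> \<delta>" unfolding \<delta>'_def using assms by auto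
  moreover have "pi * \<bar>d\<bar> / (y - z) \<le> s * sinus_potential \<alpha> \<beta> c y" if y: "y \<in> {z<..<z + \<delta>'}" for y
  proof -
    have "sinus_flow y \<noteq> c" using y sign \<open>\<delta>' \<le> \<delta>\<close> by force
    have "\<bar>sinus_flow y - c\<bar> \<le> pi / 2 * (y - z)"
      using sinus_flow_lipschitz[of y z] y \<open>sinus_flow z = c\<close> by auto
    then have "pi\<^sup>2 * \<bar>d\<bar> / (pi / 2 * (y - z)) \<le> pi\<^sup>2 * \<bar>d\<bar> / \<bar>sinus_flow y - c\<bar>"
      using \<open>sinus_flow y \<noteq> c\<close> y \<open>0 < \<bar>d\<bar>\<close> by (intro divide_left_mono) auto
    moreover have "pi\<^sup>2 * \<bar>d\<bar> / (pi / 2 * (y - z)) = 2 * (pi * \<bar>d\<bar> / (y - z))"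
      using y by (simp add: field_simps power2_eq_square)
    ultimately have pole: "2 * (pi * \<bar>d\<bar> / (y - z)) \<le> pi\<^sup>2 * \<bar>d\<bar> / \<bar>sinus_flow y - c\<bar>"
      by simp
    have "s * sinus_potential \<alpha> \<beta> c y = s * (\<alpha>\<^sup>2 - pi\<^sup>2) + pi\<^sup>2 * \<bar>d\<bar> / \<bar>sinus_flow y - c\<bar>"
      unfolding s_def d_def using y \<open>\<delta>' \<le> \<delta>\<close>
      by (intro signed_sinus_potential[OF e _ \<open>sinus_flow y \<noteq> c\<close>] e_abs) auto
    moreover have "- A \<le> s * (\<alpha>\<^sup>2 - pi\<^sup>2)"
    proof -
      have "\<bar>s\<bar> = 1" unfolding s_def using e \<open>0 < \<bar>d\<bar>\<close> by (simp add: abs_mult abs_sgn_eq)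
      then show ?thesis
        unfolding A_def using abs_ge_minus_self[of "s * (\<alpha>\<^sup>2 - pi\<^sup>2)"] by (simp add: abs_mult)
    qed
    moreover have "y - z < pi * \<bar>d\<bar> / (A + 1)"
      using y unfolding \<delta>'_def by auto
    then have "A + 1 < pi * \<bar>d\<bar> / (y - z)"
      using y \<open>0 \<le> A\<close> by (simp add: field_simps)
    ultimately show ?thesis
      using pole by linarith
  qed
  ultimately show ?thesis
    using that[where m = "pi * \<bar>d\<bar>" and s = s] \<open>0 < \<bar>d\<bar>\<close> by auto
qed

section \<open>Real solutions\<close>

text \<open>\<open>u\<close> stands for the real or imaginary part of a neutral mode and \<open>v\<close> for its derivative.
  The equation \<open>v' = q u\<close> is only available off the critical layer \<open>sinus_flow y = c\<close>,
  except when \<open>c = U_beta \<beta>\<close>, where the potential is constant.\<close>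
locale sinus_real_mode =
  fixes \<alpha> \<beta> c :: real and u v :: "real \<Rightarrow> real"
  assumes alpha_sq_ge: "3 * pi\<^sup>2 / 4 \<le> \<alpha>\<^sup>2"
    and U_beta_nonneg: "0 \<le> U_beta \<beta>" and U_beta_le_one: "U_beta \<beta> \<le> 1"
    and cont_u: "continuous_on {-1..1} u" and cont_v: "continuous_on {-1..1} v"
    and deriv_u: "\<And>y. y \<in> {-1<..<1} \<Longrightarrow> (u has_real_derivative v y) (at y)"
    and deriv_v: "\<And>y. y \<in> {-1<..<1} \<Longrightarrow> c = U_beta \<beta> \<or> sinus_flow y \<noteq> c \<Longrightarrow>
                   (v has_real_derivative sinus_potential \<alpha> \<beta> c y * u y) (at y)"
    and u_minus_one: "u (-1) = 0" and u_one: "u 1 = 0"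
begin

abbreviation q :: "real \<Rightarrow> real" where
  "q \<equiv> sinus_potential \<alpha> \<beta> c"

lemma v_bounded:
  obtains S where "\<And>y. y \<in> {-1..1} \<Longrightarrow> \<bar>v y\<bar> \<le> S"
proof -
  have "continuous_on {-1..1} (\<lambda>y. \<bar>v y\<bar>)"
    using cont_v by (intro continuous_intros)
  then obtain x where "\<forall>y\<in>{-1..1}. \<bar>v y\<bar> \<le> \<bar>v x\<bar>"
    using continuous_attains_sup[of "{-1..1::real}" "\<lambda>y. \<bar>v y\<bar>"] by auto
  then show ?thesis using that by blast
qed

lemma zero_where_potential_gt:
  assumes "-1 \<le> a" "a < b" "b \<le> 1" "u a = 0" "u b = 0"
    and regular: "\<And>y. y \<in> {a<..<b} \<Longrightarrow> c = U_beta \<beta> \<or> sinus_flow y \<noteq> c"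
    and q_gt: "\<And>y. y \<in> {a<..<b} \<Longrightarrow> - (pi\<^sup>2 / 4) < q y"
  shows "\<forall>y\<in>{a..b}. u y = 0"
proof -
  obtain S where S: "\<And>y. y \<in> {-1..1} \<Longrightarrow> \<bar>v y\<bar> \<le> S"
    using v_bounded by blast
  have vanish: "\<forall>y\<in>{a<..<b}. (q y + pi\<^sup>2 / 4) * (u y)\<^sup>2 = 0"
  proof (rule picone_cos_comparison(2)[where v = v and S = S])
    show "continuous_on {a..b} u"
      using continuous_on_subset[OF cont_u] assms by auto
    show "(u has_real_derivative v y) (at y)" if "y \<in> {a<..<b}" for y
      using that assms by (intro deriv_u) auto
    show "(v has_real_derivative q y * u y) (at y)" if "y \<in> {a<..<b}" for y
      using that assms regular[OF that] by (intro deriv_v) auto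
    show "\<bar>v y\<bar> \<le> S" if "y \<in> {a<..<b}" for y
      using that assms S by auto
    show "- (pi\<^sup>2 / 4) \<le> q y" if "y \<in> {a<..<b}" for y
      using q_gt[OF that] by simp
  qed (use assms in auto)
  then have "u y = 0" if "y \<in> {a<..<b}" for y
  proof -
    have "q y + pi\<^sup>2 / 4 \<noteq> 0" using q_gt[OF that] by linarith
    then show ?thesis using bspec[OF vanish that] by simp
  qed
  then show ?thesis
    using \<open>u a = 0\<close> \<open>u b = 0\<close> by (metis atLeastAtMost_iff greaterThanLessThan_iff order_le_less)
qed

lemma v_zero_where_u_zero:
  assumes "-1 \<le> a" "a < b" "b \<le> 1" and u_zero: "\<forall>y\<in>{a..b}. u y = 0"
  shows "v a = 0" "v b = 0"
proof -
  have "v y = 0" if y: "y \<in> {a<..<b}" for y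
  proof -
    have "(u has_real_derivative v y) (at y)"
      using y assms by (intro deriv_u) auto
    then have "((\<lambda>_. 0) has_real_derivative v y) (at y)"
      by (rule has_field_derivative_transform_within_open[OF _ open_greaterThanLessThan y])
        (use u_zero in auto)
    then show ?thesis using DERIV_const DERIV_unique by blast
  qed
  moreover have "continuous_on (closure {a<..<b}) v"
    using continuous_on_subset[OF cont_v] assms by auto
  ultimately have "v x = 0" if "x \<in> closure {a<..<b}" for x
    using continuous_constant_on_closure[of "{a<..<b}" v 0 x] that by blast
  then show "v a = 0" "v b = 0"
    using \<open>a < b\<close> by auto
qed

lemma zero_at_critical_point:
  assumes "c \<noteq> U_beta \<beta>" "-1 \<le> z" "z < b" "b \<le> 1" "sinus_flow z = c"
    and sign: "(\<forall>y\<in>{z<..<b}. c < sinus_flow y) \<or> (\<forall>y\<in>{z<..<b}. sinus_flow y < c)"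
  shows "u z = 0"
proof -
  obtain \<delta> s m where \<delta>: "0 < \<delta>" "\<delta> \<le> b - z" "0 < m"
    and pole: "\<And>y. y \<in> {z<..<z + \<delta>} \<Longrightarrow> m / (y - z) \<le> s * q y"
    by (rule sinus_potential_pole[where \<delta> = "b - z" and \<alpha> = \<alpha>]) (use assms in auto)
  have "continuous_on {z..z + \<delta>} u" "continuous_on {z..z + \<delta>} v"
    using continuous_on_subset[OF cont_u] continuous_on_subset[OF cont_v] assms \<delta> by auto
  moreover have "(v has_real_derivative q y * u y) (at y)" if "y \<in> {z<..<z + \<delta>}" for y
  proof (rule deriv_v)
    have "y \<in> {z<..<b}" using that \<delta> by auto
    then show "c = U_beta \<beta> \<or> sinus_flow y \<noteq> c"
      using sign by fastforce
  qed (use that assms \<delta> in auto)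
  ultimately show ?thesis
    using zero_at_nonintegrable_singularity[OF \<open>0 < \<delta>\<close> _ _ _ pole \<open>0 < m\<close>] by blast
qed

lemma zero_right_of_critical_point:
  assumes "-1 \<le> z" "z < b" "b \<le> 1" "0 < k"
    and gap: "\<And>y. y \<in> {z<..<b} \<Longrightarrow> k * (y - z) \<le> \<bar>sinus_flow y - c\<bar>"
    and "u z = 0" "v z = 0"
  shows "\<forall>y\<in>{z..b}. u y = 0"
proof -
  define M where "M = 2 * \<bar>\<alpha>\<^sup>2 - pi\<^sup>2\<bar> + pi\<^sup>2 * \<bar>c - U_beta \<beta>\<bar> / k + 1"
  have "0 < M" unfolding M_def using \<open>0 < k\<close> by (simp add: add_nonneg_pos)
  show ?thesis
  proof (rule zero_of_vanishing_data_at_left[where v = v and g = "\<lambda>y. q y * u y" and M = M])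
    show "continuous_on {z..b} u" "continuous_on {z..b} v"
      using continuous_on_subset[OF cont_u] continuous_on_subset[OF cont_v] assms by auto
    show "(v has_real_derivative q y * u y) (at y)" if "y \<in> {z<..<b}" for y
    proof (rule deriv_v)
      have "0 < k * (y - z)" using that \<open>0 < k\<close> by simp
      then show "c = U_beta \<beta> \<or> sinus_flow y \<noteq> c" using gap[OF that] by auto
    qed (use that assms in auto)
    show "\<bar>q y * u y\<bar> \<le> M * \<bar>u y\<bar> / (y - z)" if "y \<in> {z<..<b}" for y
    proof -
      have "\<bar>q y\<bar> \<le> (2 * \<bar>\<alpha>\<^sup>2 - pi\<^sup>2\<bar> + pi\<^sup>2 * \<bar>c - U_beta \<beta>\<bar> / k) / (y - z)"
        using that assms gap[OF that] by (intro sinus_potential_bound) auto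
      also have "\<dots> \<le> M / (y - z)"
        unfolding M_def using that by (intro divide_right_mono) auto
      finally show ?thesis
        using mult_right_mono[of "\<bar>q y\<bar>" "M / (y - z)" "\<bar>u y\<bar>"] by (simp add: abs_mult)
    qed
  qed (use assms deriv_u \<open>0 < M\<close> in auto)
qed

lemma zero_left_of_critical_point:
  assumes "-1 \<le> a" "a < z" "z \<le> 1" "0 < k"
    and gap: "\<And>y. y \<in> {a<..<z} \<Longrightarrow> k * (z - y) \<le> \<bar>sinus_flow y - c\<bar>"
    and "u z = 0" "v z = 0"
  shows "\<forall>y\<in>{a..z}. u y = 0"
proof -
  define M where "M = 2 * \<bar>\<alpha>\<^sup>2 - pi\<^sup>2\<bar> + pi\<^sup>2 * \<bar>c - U_beta \<beta>\<bar> / k + 1"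
  have "0 < M" unfolding M_def using \<open>0 < k\<close> by (simp add: add_nonneg_pos)
  show ?thesis
  proof (rule zero_of_vanishing_data_at_right[where v = v and g = "\<lambda>y. q y * u y" and M = M])
    show "continuous_on {a..z} u" "continuous_on {a..z} v"
      using continuous_on_subset[OF cont_u] continuous_on_subset[OF cont_v] assms by auto
    show "(v has_real_derivative q y * u y) (at y)" if "y \<in> {a<..<z}" for y
    proof (rule deriv_v)
      have "0 < k * (z - y)" using that \<open>0 < k\<close> by simp
      then show "c = U_beta \<beta> \<or> sinus_flow y \<noteq> c" using gap[OF that] by auto
    qed (use that assms in auto)
    show "\<bar>q y * u y\<bar> \<le> M * \<bar>u y\<bar> / (z - y)" if "y \<in> {a<..<z}" for y
    proof -
      have "\<bar>q y\<bar> \<le> (2 * \<bar>\<alpha>\<^sup>2 - pi\<^sup>2\<bar> + pi\<^sup>2 * \<bar>c - U_beta \<beta>\<bar> / k) / (z - y)"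
        using that assms gap[OF that] by (intro sinus_potential_bound) auto
      also have "\<dots> \<le> M / (z - y)"
        unfolding M_def using that by (intro divide_right_mono) auto
      finally show ?thesis
        using mult_right_mono[of "\<bar>q y\<bar>" "M / (z - y)" "\<bar>u y\<bar>"] by (simp add: abs_mult)
    qed
  qed (use assms deriv_u \<open>0 < M\<close> in auto)
qed

lemma zero_without_critical_layer:
  assumes "c \<noteq> U_beta \<beta>" "c \<le> 0 \<or> 1 < c"
  shows "\<forall>y\<in>{-1..1}. u y = 0"
proof -
  have opposite: "(c - U_beta \<beta>) * (sinus_flow y - c) < 0" if "y \<in> {-1<..<1}" for y
  proof (cases "c \<le> 0")
    case True
    then have "c - U_beta \<beta> < 0" using assms U_beta_nonneg by auto
    moreover have "\<bar>y\<bar> < 1" using that by auto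
    then have "0 < sinus_flow y - c"
      using True sinus_flow_pos[of y] by auto
    ultimately show ?thesis by (rule mult_neg_pos)
  next
    case False
    then have "0 < c - U_beta \<beta>" using assms U_beta_le_one by auto
    moreover have "sinus_flow y - c < 0"
      using False assms sinus_flow_le_one[of y] by auto
    ultimately show ?thesis by (rule mult_pos_neg)
  qed
  show ?thesis
  proof (rule zero_where_potential_gt)
    show "c = U_beta \<beta> \<or> sinus_flow y \<noteq> c" if "y \<in> {-1<..<1}" for y
      using opposite[OF that] by auto
    show "- (pi\<^sup>2 / 4) < q y" if "y \<in> {-1<..<1}" for y
      using opposite[OF that] alpha_sq_ge by (rule sinus_potential_gt[rotated])
  qed (use u_minus_one u_one in auto)
qed

lemma zero_at_critical_points:
  assumes "c \<noteq> U_beta \<beta>" "0 < c" "c \<le> 1"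
  shows "u (critical_point c) = 0" "u (- critical_point c) = 0"
proof -
  define w where "w = critical_point c"
  note crit = critical_point[OF assms(2,3), folded w_def]
  show "u w = 0"
    by (rule zero_at_critical_point[of w 1]) (use assms(1) crit in auto)
  show "u (- w) = 0"
  proof (cases "w = 0")
    case False
    then show ?thesis
      by (intro zero_at_critical_point[of "- w" w]) (use assms(1) crit in auto)
  qed (use \<open>u w = 0\<close> in simp)
qed

lemma zero_below_U_beta:
  assumes "0 < c" "c < U_beta \<beta>"
  shows "\<forall>y\<in>{-1..1}. u y = 0"
proof -
  define w where "w = critical_point c"
  have "c < 1" using assms U_beta_le_one by simp
  note crit = critical_point[OF assms(1) less_imp_le[OF \<open>c < 1\<close>], folded w_def]
  have "w \<noteq> 0" using crit(3) assms \<open>c < 1\<close> by auto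
  then have w: "0 < w" "w < 1" using crit(1,2) by auto
  have "u w = 0" "u (- w) = 0"
    using zero_at_critical_points[OF _ assms(1)] assms \<open>c < 1\<close> unfolding w_def by auto
  moreover have "c < sinus_flow y" if "y \<in> {-w<..<w}" for y
    using crit(5)[of y] that w by auto
  ultimately have middle: "\<forall>y\<in>{-w..w}. u y = 0"
    using w assms
    by (intro zero_where_potential_gt sinus_potential_gt[OF alpha_sq_ge] mult_neg_pos) force+
  then have "v w = 0" "v (- w) = 0"
    using v_zero_where_u_zero[of "- w" w] w by auto
  obtain K where K: "0 < K" "\<And>y. \<bar>y\<bar> \<le> 1 \<Longrightarrow> K * \<bar>\<bar>y\<bar> - w\<bar> \<le> \<bar>sinus_flow y - c\<bar>"
    using sinus_flow_sub_linear_lower_bound[OF assms(1) \<open>c < 1\<close>] unfolding w_def by blast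
  have "\<forall>y\<in>{w..1}. u y = 0"
  proof (rule zero_right_of_critical_point[OF _ _ _ K(1)])
    show "K * (y - w) \<le> \<bar>sinus_flow y - c\<bar>" if "y \<in> {w<..<1}" for y
      using K(2)[of y] that w by auto
  qed (use w \<open>u w = 0\<close> \<open>v w = 0\<close> in auto)
  moreover have "\<forall>y\<in>{-1..-w}. u y = 0"
  proof (rule zero_left_of_critical_point[OF _ _ _ K(1)])
    show "K * (- w - y) \<le> \<bar>sinus_flow y - c\<bar>" if "y \<in> {-1<..<-w}" for y
      using K(2)[of y] that w by (auto simp: algebra_simps)
  qed (use w \<open>u (- w) = 0\<close> \<open>v (- w) = 0\<close> in auto)
  ultimately show ?thesis
    using middle by (metis atLeastAtMost_iff linorder_le_cases)
qed

lemma zero_outside_critical_points: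
  assumes "U_beta \<beta> < c" "c \<le> 1"
  shows "\<forall>y\<in>{critical_point c..1}. u y = 0" "\<forall>y\<in>{-1..- critical_point c}. u y = 0"
proof -
  define w where "w = critical_point c"
  have "0 < c" using assms U_beta_nonneg by simp
  note crit = critical_point[OF \<open>0 < c\<close> assms(2), folded w_def]
  have below: "sinus_flow y < c" if "y \<in> {-1..1}" "w < \<bar>y\<bar>" for y
    using crit(6)[of y] that by auto
  have q_gt: "-(pi\<^sup>2 / 4) < q y" if "y \<in> {-1..1}" "w < \<bar>y\<bar>" for y
    using below[OF that] assms(1) by (intro sinus_potential_gt[OF alpha_sq_ge] mult_pos_neg) auto
  have "u w = 0" "u (- w) = 0"
    using zero_at_critical_points[OF _ \<open>0 < c\<close> assms(2)] assms(1) unfolding w_def by auto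
  show "\<forall>y\<in>{w..1}. u y = 0"
  proof (rule zero_where_potential_gt)
    show "c = U_beta \<beta> \<or> sinus_flow y \<noteq> c" "- (pi\<^sup>2 / 4) < q y" if "y \<in> {w<..<1}" for y
      using below[of y] q_gt[of y] that crit(1) by auto
  qed (use crit(1,2) \<open>u w = 0\<close> u_one in auto)
  show "\<forall>y\<in>{-1..-w}. u y = 0"
  proof (rule zero_where_potential_gt)
    show "c = U_beta \<beta> \<or> sinus_flow y \<noteq> c" "- (pi\<^sup>2 / 4) < q y" if "y \<in> {-1<..<-w}" for y
      using below[of y] q_gt[of y] that crit(1) by auto
  qed (use crit(1,2) \<open>u (- w) = 0\<close> u_minus_one in auto)
qed

lemma zero_above_U_beta:
  assumes "U_beta \<beta> < c" "c \<le> 1"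
  shows "\<forall>y\<in>{-1..1}. u y = 0"
proof -
  define w where "w = critical_point c"
  have "0 < c" using assms U_beta_nonneg by simp
  note outer = zero_outside_critical_points[OF assms, folded w_def]
  show ?thesis
  proof (cases "w = 0")
    case True
    have "y \<in> {w..1} \<or> y \<in> {-1..-w}" if "y \<in> {-1..1}" for y
      using that True by auto
    then show ?thesis using outer by blast
  next
    case False
    then have w: "0 < w" "w < 1" using critical_point(1,2)[OF \<open>0 < c\<close> assms(2)] unfolding w_def by auto
    have "c \<noteq> 1" using False unfolding w_def critical_point_def by auto
    then have "c < 1" using assms(2) by simp
    obtain K where K: "0 < K" "\<And>y. \<bar>y\<bar> \<le> 1 \<Longrightarrow> K * \<bar>\<bar>y\<bar> - w\<bar> \<le> \<bar>sinus_flow y - c\<bar>"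
      using sinus_flow_sub_linear_lower_bound[OF \<open>0 < c\<close> \<open>c < 1\<close>] unfolding w_def by blast
    have "u w = 0" "u (- w) = 0" "v w = 0" "v (- w) = 0"
      using v_zero_where_u_zero[of w 1] v_zero_where_u_zero[of "-1" "- w"] outer w by auto
    have "\<forall>y\<in>{- w..0}. u y = 0"
    proof (rule zero_right_of_critical_point[OF _ _ _ K(1)])
      show "K * (y - - w) \<le> \<bar>sinus_flow y - c\<bar>" if "y \<in> {- w<..<0}" for y
        using K(2)[of y] that w by (auto simp: algebra_simps)
    qed (use w \<open>u (- w) = 0\<close> \<open>v (- w) = 0\<close> in auto)
    moreover have "\<forall>y\<in>{0..w}. u y = 0"
    proof (rule zero_left_of_critical_point[OF _ _ _ K(1)])
      show "K * (w - y) \<le> \<bar>sinus_flow y - c\<bar>" if "y \<in> {0<..<w}" for y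
        using K(2)[of y] that w by auto
    qed (use w \<open>u w = 0\<close> \<open>v w = 0\<close> in auto)
    moreover have "y \<in> {w..1} \<or> y \<in> {-1..-w} \<or> y \<in> {- w..0} \<or> y \<in> {0..w}"
      if "y \<in> {-1..1}" for y
      using that by auto
    ultimately show ?thesis
      using outer by blast
  qed
qed

lemma zero_unless_U_beta:
  assumes "c \<noteq> U_beta \<beta>"
  shows "\<forall>y\<in>{-1..1}. u y = 0"
proof -
  consider "c \<le> 0 \<or> 1 < c" | "0 < c" "c < U_beta \<beta>" | "U_beta \<beta> < c" "c \<le> 1"
    using assms by linarith
  then show ?thesis
    using zero_without_critical_layer zero_below_U_beta zero_above_U_beta assms by cases
qed

lemma cos_multiple_at_U_beta:
  assumes "c = U_beta \<beta>"
  obtains k where "\<forall>y\<in>{-1..1}. u y = k * cos (pi * y / 2)" and "\<alpha>\<^sup>2 = 3 * pi\<^sup>2 / 4 \<or> k = 0"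
proof -
  obtain S where S: "\<And>y. y \<in> {-1..1} \<Longrightarrow> \<bar>v y\<bar> \<le> S"
    using v_bounded by blast
  have q_const: "q y = \<alpha>\<^sup>2 - pi\<^sup>2" for y
    using assms sinus_potential_U_beta by simp
  have hyps: "-1 \<le> (-1::real)" "-1 < (1::real)" "1 \<le> (1::real)" "continuous_on {-1..1} u"
    "\<And>y. y \<in> {-1<..<1} \<Longrightarrow> (u has_real_derivative v y) (at y)"
    "\<And>y. y \<in> {-1<..<1} \<Longrightarrow> (v has_real_derivative q y * u y) (at y)"
    "\<And>y. y \<in> {-1<..<1} \<Longrightarrow> \<bar>v y\<bar> \<le> S"
    "\<And>y. y \<in> {-1<..<1} \<Longrightarrow> - (pi\<^sup>2 / 4) \<le> q y"
    using cont_u deriv_u deriv_v S alpha_sq_ge assms q_const by auto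
  obtain k where k: "\<forall>y\<in>{-1<..<1}. u y = k * cos (pi * y / 2)"
    using picone_cos_comparison(1)[OF hyps u_minus_one u_one] by blast
  have "(\<alpha>\<^sup>2 - pi\<^sup>2 + pi\<^sup>2 / 4) * (u 0)\<^sup>2 = 0"
    using picone_cos_comparison(2)[OF hyps u_minus_one u_one] q_const by auto
  moreover have "u 0 = k" using k by auto
  ultimately have "\<alpha>\<^sup>2 = 3 * pi\<^sup>2 / 4 \<or> k = 0" by auto
  moreover have "\<forall>y\<in>{-1..1}. u y = k * cos (pi * y / 2)"
    using k u_minus_one u_one by (auto simp: le_less)
  ultimately show ?thesis using that by blast
qed

end

section \<open>Neutral modes\<close>

lemma continuous_on_of_has_integral_increments:
  fixes f F :: "real \<Rightarrow> 'a::banach"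
  assumes "\<And>x. x \<in> {a..b} \<Longrightarrow> (f has_integral (F x - F a)) {a..x}"
  shows "continuous_on {a..b} F"
proof (cases "a \<le> b")
  case True
  then have "f integrable_on {a..b}" using assms[of b] by (auto intro: has_integral_integrable)
  then have "continuous_on {a..b} (\<lambda>x. F a + integral {a..x} f)"
    by (intro continuous_intros indefinite_integral_continuous_1)
  moreover have "F a + integral {a..x} f = F x" if "x \<in> {a..b}" for x
    using integral_unique[OF assms[OF that]] by simp
  ultimately show ?thesis by (rule continuous_on_eq)
qed simp

lemma has_vector_derivative_of_has_integral_increments:
  fixes f F :: "real \<Rightarrow> 'a::banach"
  assumes "\<And>x. x \<in> {a..b} \<Longrightarrow> (f has_integral (F x - F a)) {a..x}"
    and "continuous_on {a..b} f" "y \<in> {a<..<b}"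
  shows "(F has_vector_derivative f y) (at y)"
proof -
  have y: "y \<in> {a..b}" using assms(3) by auto
  have F_eq: "F x = F a + integral {a..x} f" if "x \<in> {a..b}" for x
    using integral_unique[OF assms(1)[OF that]] by simp
  have "((\<lambda>x. F a + integral {a..x} f) has_vector_derivative f y) (at y within {a..b})"
    using has_vector_derivative_add[OF has_vector_derivative_const integral_has_vector_derivative[OF assms(2) y]]
    by simp
  then have "(F has_vector_derivative f y) (at y within {a..b})"
    using has_vector_derivative_transform[where f = "\<lambda>x. F a + integral {a..x} f", OF y F_eq] by blast
  moreover have "at y within {a..b} = at y"
    using assms(3) by (intro at_within_interior) auto
  ultimately show ?thesis by simp
qed

lemma H2_with_first_derivative:
  assumes "H2_with \<phi> \<phi>' \<phi>''"
  shows "continuous_on {-1..1} \<phi>" "continuous_on {-1..1} \<phi>'"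
    and "\<And>y. y \<in> {-1<..<1} \<Longrightarrow> (\<phi> has_vector_derivative \<phi>' y) (at y)"
proof -
  have from_left: "(\<phi>'' has_integral (\<phi>' x - \<phi>' (-1))) {-1..x}" "(\<phi>' has_integral (\<phi> x - \<phi> (-1))) {-1..x}"
    if "x \<in> {-1..1}" for x
    using assms that unfolding H2_with_def by auto
  show "continuous_on {-1..1} \<phi>'" "continuous_on {-1..1} \<phi>"
    using continuous_on_of_has_integral_increments[OF from_left(1)]
      continuous_on_of_has_integral_increments[OF from_left(2)] by blast+
  then show "(\<phi> has_vector_derivative \<phi>' y) (at y)" if "y \<in> {-1<..<1}" for y
    using has_vector_derivative_of_has_integral_increments[OF from_left(2) _ that] by blast
qed

lemma H2_with_second_derivative:
  assumes "H2_with \<phi> \<phi>' \<phi>''" "negligible N" "-1 \<le> a" "b \<le> 1" "y \<in> {a<..<b}"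
    and "continuous_on {a..b} g" "\<And>x. x \<in> {a..b} - N \<Longrightarrow> \<phi>'' x = g x"
  shows "(\<phi>' has_vector_derivative g y) (at y)"
proof (rule has_vector_derivative_of_has_integral_increments[OF _ assms(6,5)])
  fix x assume x: "x \<in> {a..b}"
  then have "(\<phi>'' has_integral (\<phi>' x - \<phi>' a)) {a..x}"
    using assms(1,3,4) unfolding H2_with_def by auto
  then show "(g has_integral (\<phi>' x - \<phi>' a)) {a..x}"
    by (rule has_integral_spike[OF assms(2), rotated]) (use x assms(7) in auto)
qed

lemma H2_with_of_continuous_derivatives:
  fixes \<phi> \<phi>' \<phi>'' :: "real \<Rightarrow> complex"
  assumes cont: "continuous_on {-1..1} \<phi>''"
    and d\<phi>: "\<And>y. (\<phi> has_vector_derivative \<phi>' y) (at y)"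
    and d\<phi>': "\<And>y. (\<phi>' has_vector_derivative \<phi>'' y) (at y)"
  shows "H2_with \<phi> \<phi>' \<phi>''"
  unfolding H2_with_def
proof (intro conjI allI impI)
  show "\<phi>'' absolutely_integrable_on {-1..1}"
    using cont by (rule absolutely_integrable_continuous_real)
  show "(\<lambda>x. (norm (\<phi>'' x))\<^sup>2) integrable_on {-1..1}"
    using cont by (intro integrable_continuous_real continuous_intros)
  fix a b :: real assume "-1 \<le> a" "a \<le> b" "b \<le> 1"
  show "(\<phi>'' has_integral (\<phi>' b - \<phi>' a)) {a..b}"
    using \<open>a \<le> b\<close> by (rule fundamental_theorem_of_calculus) (rule has_vector_derivative_at_within[OF d\<phi>'])
  show "(\<phi>' has_integral (\<phi> b - \<phi> a)) {a..b}"
    using \<open>a \<le> b\<close> by (rule fundamental_theorem_of_calculus) (rule has_vector_derivative_at_within[OF d\<phi>])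
qed

lemma has_vector_derivative_Re_Im:
  assumes "(f has_vector_derivative f') F"
  shows "((\<lambda>x. Re (f x)) has_real_derivative Re f') F" "((\<lambda>x. Im (f x)) has_real_derivative Im f') F"
  using bounded_linear.has_vector_derivative[OF bounded_linear_Re assms]
    bounded_linear.has_vector_derivative[OF bounded_linear_Im assms]
  by (simp_all add: has_real_derivative_iff_has_vector_derivative)

lemma continuous_on_sinus_potential:
  assumes "\<And>y. y \<in> S \<Longrightarrow> c = U_beta \<beta> \<or> sinus_flow y \<noteq> c"
  shows "continuous_on S (sinus_potential \<alpha> \<beta> c)"
proof (cases "c = U_beta \<beta>")
  case True
  then show ?thesis by (simp add: sinus_potential_U_beta)
next
  case False
  then show ?thesis
    using assms unfolding sinus_potential_def[abs_def] sinus_flow_def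
    by (intro continuous_intros) auto
qed

lemma open_regular_points: "open {y \<in> {-1<..<1}. c = U_beta \<beta> \<or> sinus_flow y \<noteq> c}"
proof (cases "c = U_beta \<beta>")
  case False
  have "continuous_on UNIV sinus_flow"
    unfolding sinus_flow_def by (intro continuous_intros) auto
  then have "open (sinus_flow -` (- {c}))"
    by (rule open_vimage[rotated]) (simp add: open_Compl)
  then have "open ({-1<..<1} \<inter> sinus_flow -` (- {c}))"
    by (rule open_Int[OF open_greaterThanLessThan])
  moreover have "{y \<in> {-1<..<1}. c = U_beta \<beta> \<or> sinus_flow y \<noteq> c} = {-1<..<1} \<inter> sinus_flow -` (- {c})"
    using False by auto
  ultimately show ?thesis by simp
next
  case True
  then have "{y \<in> {-1<..<1}. c = U_beta \<beta> \<or> sinus_flow y \<noteq> c} = {-1<..<1}"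
    by auto
  then show ?thesis by simp
qed

lemma sinus_real_mode_Re_Im:
  assumes "3 * pi\<^sup>2 / 4 \<le> \<alpha>\<^sup>2" "- (pi\<^sup>2 / 2) \<le> \<beta>" "\<beta> \<le> pi\<^sup>2 / 2"
    and cont: "continuous_on {-1..1} \<phi>" "continuous_on {-1..1} \<phi>'"
    and d\<phi>: "\<And>y. y \<in> {-1<..<1} \<Longrightarrow> (\<phi> has_vector_derivative \<phi>' y) (at y)"
    and d\<phi>': "\<And>y. y \<in> {-1<..<1} \<Longrightarrow> c = U_beta \<beta> \<or> sinus_flow y \<noteq> c \<Longrightarrow>
               (\<phi>' has_vector_derivative complex_of_real (sinus_potential \<alpha> \<beta> c y) * \<phi> y) (at y)"
    and "\<phi> (-1) = 0" "\<phi> 1 = 0"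
  shows "sinus_real_mode \<alpha> \<beta> c (\<lambda>y. Re (\<phi> y)) (\<lambda>y. Re (\<phi>' y))"
    and "sinus_real_mode \<alpha> \<beta> c (\<lambda>y. Im (\<phi> y)) (\<lambda>y. Im (\<phi>' y))"
proof -
  show "sinus_real_mode \<alpha> \<beta> c (\<lambda>y. Re (\<phi> y)) (\<lambda>y. Re (\<phi>' y))"
  proof
    show "continuous_on {-1..1} (\<lambda>y. Re (\<phi> y))" "continuous_on {-1..1} (\<lambda>y. Re (\<phi>' y))"
      using cont by (auto intro: continuous_intros)
    show "((\<lambda>y. Re (\<phi> y)) has_real_derivative Re (\<phi>' y)) (at y)" if "y \<in> {-1<..<1}" for y
      using has_vector_derivative_Re_Im(1)[OF d\<phi>[OF that]] .
    show "((\<lambda>y. Re (\<phi>' y)) has_real_derivative sinus_potential \<alpha> \<beta> c y * Re (\<phi> y)) (at y)"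
      if "y \<in> {-1<..<1}" "c = U_beta \<beta> \<or> sinus_flow y \<noteq> c" for y
      using has_vector_derivative_Re_Im(1)[OF d\<phi>'[OF that]] by simp
  qed (use assms U_beta_bounds in auto)
  show "sinus_real_mode \<alpha> \<beta> c (\<lambda>y. Im (\<phi> y)) (\<lambda>y. Im (\<phi>' y))"
  proof
    show "continuous_on {-1..1} (\<lambda>y. Im (\<phi> y))" "continuous_on {-1..1} (\<lambda>y. Im (\<phi>' y))"
      using cont by (auto intro: continuous_intros)
    show "((\<lambda>y. Im (\<phi> y)) has_real_derivative Im (\<phi>' y)) (at y)" if "y \<in> {-1<..<1}" for y
      using has_vector_derivative_Re_Im(2)[OF d\<phi>[OF that]] .
    show "((\<lambda>y. Im (\<phi>' y)) has_real_derivative sinus_potential \<alpha> \<beta> c y * Im (\<phi> y)) (at y)"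
      if "y \<in> {-1<..<1}" "c = U_beta \<beta> \<or> sinus_flow y \<noteq> c" for y
      using has_vector_derivative_Re_Im(2)[OF d\<phi>'[OF that]] by simp
  qed (use assms U_beta_bounds in auto)
qed

lemma neutral_mode_real_parts:
  assumes nm: "neutral_mode sinus_flow c \<alpha> \<beta> \<phi>"
    and "3 * pi\<^sup>2 / 4 \<le> \<alpha>\<^sup>2" "- (pi\<^sup>2 / 2) \<le> \<beta>" "\<beta> \<le> pi\<^sup>2 / 2"
  obtains \<phi>' where "sinus_real_mode \<alpha> \<beta> c (\<lambda>y. Re (\<phi> y)) (\<lambda>y. Re (\<phi>' y))"
    and "sinus_real_mode \<alpha> \<beta> c (\<lambda>y. Im (\<phi> y)) (\<lambda>y. Im (\<phi>' y))"
proof -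
  obtain \<phi>' \<phi>'' where H2: "H2_with \<phi> \<phi>' \<phi>''"
    and eq: "AE y in lebesgue. y \<in> {-1<..<1} \<longrightarrow> sinus_flow y \<noteq> c \<longrightarrow>
           - \<phi>'' y + complex_of_real (\<alpha>\<^sup>2) * \<phi> y
             - complex_of_real ((\<beta> - deriv (deriv sinus_flow) y) / (sinus_flow y - c)) * \<phi> y = 0"
    using nm unfolding neutral_mode_def by blast
  obtain N where "N \<in> null_sets lebesgue" and N: "\<And>y. y \<in> space lebesgue - N \<Longrightarrow> y \<in> {-1<..<1} \<longrightarrow> sinus_flow y \<noteq> c \<longrightarrow>
           - \<phi>'' y + complex_of_real (\<alpha>\<^sup>2) * \<phi> y
             - complex_of_real ((\<beta> - deriv (deriv sinus_flow) y) / (sinus_flow y - c)) * \<phi> y = 0"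
    by (rule AE_E3[OF eq], rule that)
  define N' where "N' = N \<union> {y \<in> {-1<..<1}. sinus_flow y = c}"
  have "negligible N'"
    unfolding N'_def using \<open>N \<in> null_sets lebesgue\<close> negligible_sinus_flow_level_set[of c]
    by (auto simp: negligible_iff_null_sets[symmetric])
  have ae: "\<phi>'' y = complex_of_real (sinus_potential \<alpha> \<beta> c y) * \<phi> y" if "y \<in> {-1<..<1} - N'" for y
  proof -
    define K where "K = (\<beta> - deriv (deriv sinus_flow) y) / (sinus_flow y - c)"
    have "sinus_flow y \<noteq> c" "y \<in> space lebesgue - N" using that unfolding N'_def by auto
    then have "- \<phi>'' y + complex_of_real (\<alpha>\<^sup>2) * \<phi> y - complex_of_real K * \<phi> y = 0"
      using N[of y] that unfolding K_def by auto
    then have "\<phi>'' y = complex_of_real (\<alpha>\<^sup>2 - K) * \<phi> y"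
      by (simp add: algebra_simps)
    then show ?thesis
      unfolding K_def rayleigh_kuo_coefficient_eq[OF \<open>sinus_flow y \<noteq> c\<close>] .
  qed
  have d\<phi>': "(\<phi>' has_vector_derivative complex_of_real (sinus_potential \<alpha> \<beta> c y) * \<phi> y) (at y)"
    if "y \<in> {-1<..<1}" "c = U_beta \<beta> \<or> sinus_flow y \<noteq> c" for y
  proof -
    have "y \<in> {y \<in> {-1<..<1}. c = U_beta \<beta> \<or> sinus_flow y \<noteq> c}" using that by blast
    then obtain e where "0 < e" and e: "cball y e \<subseteq> {y \<in> {-1<..<1}. c = U_beta \<beta> \<or> sinus_flow y \<noteq> c}"
      using open_regular_points[of c \<beta>, unfolded open_contains_cball] by blast
    then have ends: "-1 < y - e" "y + e < 1"
      and regular: "\<And>x. x \<in> {y - e..y + e} \<Longrightarrow> c = U_beta \<beta> \<or> sinus_flow x \<noteq> c"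
      by (auto simp: cball_eq_atLeastAtMost subset_iff)
    show ?thesis
    proof (rule H2_with_second_derivative[OF H2 \<open>negligible N'\<close>])
      show "continuous_on {y - e..y + e} (\<lambda>x. complex_of_real (sinus_potential \<alpha> \<beta> c x) * \<phi> x)"
        using ends by (intro continuous_intros continuous_on_sinus_potential regular
            continuous_on_subset[OF H2_with_first_derivative(1)[OF H2]]) auto
      show "\<phi>'' x = complex_of_real (sinus_potential \<alpha> \<beta> c x) * \<phi> x" if "x \<in> {y - e..y + e} - N'" for x
        using ae[of x] that ends by auto
    qed (use ends \<open>0 < e\<close> in auto)
  qed
  have "\<phi> (-1) = 0" "\<phi> 1 = 0"
    using nm unfolding neutral_mode_def by auto
  then show ?thesis
    using sinus_real_mode_Re_Im[OF assms(2-4) H2_with_first_derivative[OF H2] d\<phi>'] that by blast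
qed

lemma neutral_mode_classification:
  assumes nm: "neutral_mode sinus_flow c \<alpha> \<beta> \<phi>"
    and "3 * pi\<^sup>2 / 4 \<le> \<alpha>\<^sup>2" "- (pi\<^sup>2 / 2) \<le> \<beta>" "\<beta> \<le> pi\<^sup>2 / 2"
  shows "c = U_beta \<beta> \<and> \<alpha>\<^sup>2 = 3 * pi\<^sup>2 / 4 \<and> (\<exists>k. \<forall>y\<in>{-1..1}. \<phi> y = k * complex_of_real (cos (pi * y / 2)))"
proof -
  obtain \<phi>' where Re: "sinus_real_mode \<alpha> \<beta> c (\<lambda>y. Re (\<phi> y)) (\<lambda>y. Re (\<phi>' y))"
    and Im: "sinus_real_mode \<alpha> \<beta> c (\<lambda>y. Im (\<phi> y)) (\<lambda>y. Im (\<phi>' y))"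
    using neutral_mode_real_parts[OF assms] by blast
  have nontrivial: "\<exists>y\<in>{-1..1}. \<phi> y \<noteq> 0"
    using nm unfolding neutral_mode_def by blast
  have c: "c = U_beta \<beta>"
  proof (rule ccontr)
    assume "c \<noteq> U_beta \<beta>"
    then have "\<forall>y\<in>{-1..1}. Re (\<phi> y) = 0 \<and> Im (\<phi> y) = 0"
      using sinus_real_mode.zero_unless_U_beta[OF Re] sinus_real_mode.zero_unless_U_beta[OF Im] by blast
    then show False using nontrivial by (auto simp: complex_eq_iff)
  qed
  obtain k\<^sub>r where k\<^sub>r: "\<forall>y\<in>{-1..1}. Re (\<phi> y) = k\<^sub>r * cos (pi * y / 2)" "\<alpha>\<^sup>2 = 3 * pi\<^sup>2 / 4 \<or> k\<^sub>r = 0"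
    using sinus_real_mode.cos_multiple_at_U_beta[OF Re c] by blast
  obtain k\<^sub>i where k\<^sub>i: "\<forall>y\<in>{-1..1}. Im (\<phi> y) = k\<^sub>i * cos (pi * y / 2)" "\<alpha>\<^sup>2 = 3 * pi\<^sup>2 / 4 \<or> k\<^sub>i = 0"
    using sinus_real_mode.cos_multiple_at_U_beta[OF Im c] by blast
  have \<phi>: "\<forall>y\<in>{-1..1}. \<phi> y = Complex k\<^sub>r k\<^sub>i * complex_of_real (cos (pi * y / 2))"
    using k\<^sub>r(1) k\<^sub>i(1) by (auto simp: complex_eq_iff)
  have "\<alpha>\<^sup>2 = 3 * pi\<^sup>2 / 4"
  proof (rule ccontr)
    assume "\<alpha>\<^sup>2 \<noteq> 3 * pi\<^sup>2 / 4"
    then show False using k\<^sub>r(2) k\<^sub>i(2) \<phi> nontrivial by (auto simp: complex_eq_iff)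
  qed
  then show ?thesis using c \<phi> by blast
qed

lemma cos_neutral_mode:
  assumes "0 < \<alpha>" "\<alpha>\<^sup>2 = 3 * pi\<^sup>2 / 4"
  shows "neutral_mode sinus_flow (U_beta \<beta>) \<alpha> \<beta> (\<lambda>y. complex_of_real (cos (pi * y / 2)))"
proof -
  define \<phi> where "\<phi> y = complex_of_real (cos (pi * y / 2))" for y
  define \<phi>' where "\<phi>' y = complex_of_real (- (pi / 2) * sin (pi * y / 2))" for y
  define \<phi>'' where "\<phi>'' y = complex_of_real (- (pi\<^sup>2 / 4) * cos (pi * y / 2))" for y
  have d\<phi>: "(\<phi> has_vector_derivative \<phi>' y) (at y)" for y
    unfolding \<phi>_def \<phi>'_def
    by (rule has_vector_derivative_of_real) (auto intro!: derivative_eq_intros)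
  have d\<phi>': "(\<phi>' has_vector_derivative \<phi>'' y) (at y)" for y
    unfolding \<phi>'_def \<phi>''_def
    by (rule has_vector_derivative_of_real) (auto intro!: derivative_eq_intros simp: power2_eq_square)
  have "continuous_on {-1..1} \<phi>''"
    unfolding \<phi>''_def by (intro continuous_intros) auto
  then have H2: "H2_with \<phi> \<phi>' \<phi>''"
    using d\<phi> d\<phi>' by (rule H2_with_of_continuous_derivatives)
  have equation: "- \<phi>'' y + complex_of_real (\<alpha>\<^sup>2) * \<phi> y
      - complex_of_real ((\<beta> - deriv (deriv sinus_flow) y) / (sinus_flow y - U_beta \<beta>)) * \<phi> y = 0"
    if "sinus_flow y \<noteq> U_beta \<beta>" for y
  proof -
    have K: "(\<beta> - deriv (deriv sinus_flow) y) / (sinus_flow y - U_beta \<beta>) = pi\<^sup>2"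
      using rayleigh_kuo_coefficient_eq[OF that, of \<alpha> \<beta>] sinus_potential_U_beta[of \<alpha> \<beta> y] by simp
    have "- \<phi>'' y + complex_of_real (\<alpha>\<^sup>2) * \<phi> y
      - complex_of_real ((\<beta> - deriv (deriv sinus_flow) y) / (sinus_flow y - U_beta \<beta>)) * \<phi> y
      = complex_of_real ((pi\<^sup>2 / 4 + \<alpha>\<^sup>2 - pi\<^sup>2) * cos (pi * y / 2))"
      unfolding K \<phi>_def \<phi>''_def by (simp add: algebra_simps)
    also have "pi\<^sup>2 / 4 + \<alpha>\<^sup>2 - pi\<^sup>2 = 0" using assms(2) by simp
    finally show ?thesis by simp
  qed
  show ?thesis
    unfolding neutral_mode_def
  proof (intro conjI exI)
    show "\<exists>y\<in>{-1..1}. complex_of_real (cos (pi * y / 2)) \<noteq> 0"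
      by (rule bexI[of _ 0]) auto
    show "H2_with (\<lambda>y. complex_of_real (cos (pi * y / 2))) \<phi>' \<phi>''"
      using H2 unfolding \<phi>_def .
    show "AE y in lebesgue. y \<in> {-1<..<1} \<longrightarrow> sinus_flow y \<noteq> U_beta \<beta> \<longrightarrow>
        - \<phi>'' y + complex_of_real (\<alpha>\<^sup>2) * complex_of_real (cos (pi * y / 2))
        - complex_of_real ((\<beta> - deriv (deriv sinus_flow) y) / (sinus_flow y - U_beta \<beta>))
          * complex_of_real (cos (pi * y / 2)) = 0"
      using equation unfolding \<phi>_def by (intro always_eventually allI impI) auto
  qed (use assms(1) in auto)
qed

theorem lemma6p1:
  fixes \<beta> :: real
  assumes "-(pi\<^sup>2/2) \<le> \<beta>" and "\<beta> \<le> pi\<^sup>2/2"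
  shows "(\<forall>\<alpha>>0. \<alpha>\<^sup>2 > 3 * pi\<^sup>2 / 4 \<longrightarrow> \<not> (\<exists>c \<phi>. neutral_mode sinus_flow c \<alpha> \<beta> \<phi>))
       \<and> (\<forall>\<alpha>>0. \<alpha>\<^sup>2 = 3 * pi\<^sup>2 / 4 \<longrightarrow>
            neutral_mode sinus_flow (1/2 - \<beta> / pi\<^sup>2) \<alpha> \<beta> (\<lambda>y. complex_of_real (cos (pi * y / 2)))
          \<and> (\<forall>c \<phi>. neutral_mode sinus_flow c \<alpha> \<beta> \<phi> \<longrightarrow>
               c = 1/2 - \<beta> / pi\<^sup>2 \<and>
               (\<exists>k::complex. \<forall>y\<in>{-1..1}. \<phi> y = k * complex_of_real (cos (pi * y / 2)))))"
proof (intro conjI allI impI notI)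
  fix \<alpha> :: real
  assume "3 * pi\<^sup>2 / 4 < \<alpha>\<^sup>2" "\<exists>c \<phi>. neutral_mode sinus_flow c \<alpha> \<beta> \<phi>"
  then show False
    using neutral_mode_classification[OF _ _ assms] by force
next
  fix \<alpha> :: real
  assume "0 < \<alpha>" "\<alpha>\<^sup>2 = 3 * pi\<^sup>2 / 4"
  then show "neutral_mode sinus_flow (1/2 - \<beta> / pi\<^sup>2) \<alpha> \<beta> (\<lambda>y. complex_of_real (cos (pi * y / 2)))"
    using cos_neutral_mode unfolding U_beta_def by blast
next
  fix \<alpha> c :: real and \<phi>
  assume "\<alpha>\<^sup>2 = 3 * pi\<^sup>2 / 4" "neutral_mode sinus_flow c \<alpha> \<beta> \<phi>"
  then show "c = 1/2 - \<beta> / pi\<^sup>2"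
    and "\<exists>k::complex. \<forall>y\<in>{-1..1}. \<phi> y = k * complex_of_real (cos (pi * y / 2))"
    using neutral_mode_classification[OF _ _ assms] unfolding U_beta_def by simp_all
qed

end
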